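(* Let $M$ be an $A\mathcal{V}$-module that is finitely generated as an $A$-module. Then $M$ is a holonomic $A\mathcal{V}$-module.
   Context: Setup: $\Bbbk$ algebraically closed, characteristic $0$; $A=\Bbbk[x_1,\dots,x_n]$; $\mathcal{V}=\mathrm{Der}(A)$. An $A\mathcal{V}$-module is an $A$-module and $\mathcal{V}$-module $M$ with $\eta(fm)=\eta(f)m+f(\eta m)$ for $\eta\in\mathcal{V},f\in A,m\in M$, i.e. a module over the smash product $A\#U(\mathcal{V})$. $\mathrm{GKdim}_{A\mathcal{V}}$ is the Gelfand–Kirillov dimension over $A\#U(\mathcal{V})$: $\limsup_m\log_m\dim(C^mM_0)$ for a finite-dimensional generating subspace $C\ni1$ of the algebra and a finite-dimensional generating subspace $M_0$ of the module. A finitely generated $A\mathcal{V}$-module $M$ is holonomic if $M=0$ or $\mathrm{GKdim}_{A\mathcal{V}}(M)=n$. *)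

theory Defs
  imports "HOL-Library.Poly_Mapping" "HOL-Computational_Algebra.Polynomial" "HOL-Library.Extended_Real" "HOL-Library.Function_Algebras"
begin

text \<open>Polynomial ring A = k[x_i | i in 'n] over a field k, with a finite index type 'n
  of variables (so n = CARD('n)).  Monomials are finitely supported exponent vectors.\<close>
type_synonym ('n, 'k) mpoly = "('n \<Rightarrow>\<^sub>0 nat) \<Rightarrow>\<^sub>0 'k"

definition constA :: "'k::comm_ring_1 \<Rightarrow> ('n, 'k) mpoly" where
  "constA c = Poly_Mapping.single 0 c"

definition alg_closed_field :: "'k::field itself \<Rightarrow> bool" where
  "alg_closed_field _ \<longleftrightarrow> (\<forall>p :: 'k poly. degree p > 0 \<longrightarrow> (\<exists>x. poly p x = 0))"

text \<open>V = Der(A): k-linear derivations of A.\<close>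
definition Der :: "(('n, 'k::field) mpoly \<Rightarrow> ('n, 'k) mpoly) set" where
  "Der = {D. (\<forall>p q. D (p + q) = D p + D q) \<and> (\<forall>c p. D (constA c * p) = constA c * D p)
            \<and> (\<forall>p q. D (p * q) = p * D q + q * D p)}"

definition lie_bracket :: "('a \<Rightarrow> 'a::ab_group_add) \<Rightarrow> ('a \<Rightarrow> 'a) \<Rightarrow> 'a \<Rightarrow> 'a" where
  "lie_bracket D E = (\<lambda>p. D (E p) - E (D p))"

definition AV_module ::
  "('k::field \<Rightarrow> 'm::ab_group_add \<Rightarrow> 'm) \<Rightarrow> (('n, 'k) mpoly \<Rightarrow> 'm \<Rightarrow> 'm)
     \<Rightarrow> ((('n, 'k) mpoly \<Rightarrow> ('n, 'k) mpoly) \<Rightarrow> 'm \<Rightarrow> 'm) \<Rightarrow> bool" where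
  "AV_module smul actA actV \<longleftrightarrow>
     vector_space smul
     \<comment> \<open>A-module (unital, k-algebra compatible)\<close>
     \<and> (\<forall>f g m. actA (f * g) m = actA f (actA g m))
     \<and> (\<forall>f g m. actA (f + g) m = actA f m + actA g m)
     \<and> (\<forall>f m m'. actA f (m + m') = actA f m + actA f m')
     \<and> (\<forall>c m. actA (constA c) m = smul c m)
     \<comment> \<open>V-module (Lie algebra module over k)\<close>
     \<and> (\<forall>D\<in>Der. \<forall>E\<in>Der. \<forall>m. actV (\<lambda>p. D p + E p) m = actV D m + actV E m)
     \<and> (\<forall>D\<in>Der. \<forall>c m. actV (\<lambda>p. constA c * D p) m = smul c (actV D m))
     \<and> (\<forall>D\<in>Der. \<forall>m m'. actV D (m + m') = actV D m + actV D m')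
     \<and> (\<forall>D\<in>Der. \<forall>c m. actV D (smul c m) = smul c (actV D m))
     \<and> (\<forall>D\<in>Der. \<forall>E\<in>Der. \<forall>m. actV (lie_bracket D E) m = actV D (actV E m) - actV E (actV D m))
     \<comment> \<open>compatibility\<close>
     \<and> (\<forall>D\<in>Der. \<forall>f m. actV D (actA f m) = actA (D f) m + actA f (actV D m))"

definition fg_A_module :: "(('n, 'k::field) mpoly \<Rightarrow> 'm::ab_group_add \<Rightarrow> 'm) \<Rightarrow> bool" where
  "fg_A_module actA \<longleftrightarrow>
     (\<exists>G. finite G \<and> (\<forall>m. \<exists>c. m = (\<Sum>g\<in>G. actA (c g) g)))"

definition op_smul :: "('k::field \<Rightarrow> 'm \<Rightarrow> 'm) \<Rightarrow> 'k \<Rightarrow> ('m \<Rightarrow> 'm) \<Rightarrow> 'm \<Rightarrow> 'm" where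
  "op_smul smul c T = (\<lambda>x. smul c (T x))"

text \<open>The k-subalgebra of End_k(M) generated by a set X of operators: span of all words.\<close>
definition alg_gen :: "('k::field \<Rightarrow> 'm \<Rightarrow> 'm) \<Rightarrow> ('m \<Rightarrow> 'm) set \<Rightarrow> ('m \<Rightarrow> 'm::ab_group_add) set" where
  "alg_gen smul X = module.span (op_smul smul) {foldr (\<circ>) ws id | ws. set ws \<subseteq> X}"

text \<open>Image of A # U(V) in End_k(M).\<close>
definition AV_ops ::
  "('k::field \<Rightarrow> 'm::ab_group_add \<Rightarrow> 'm) \<Rightarrow> (('n, 'k) mpoly \<Rightarrow> 'm \<Rightarrow> 'm)
     \<Rightarrow> ((('n, 'k) mpoly \<Rightarrow> ('n, 'k) mpoly) \<Rightarrow> 'm \<Rightarrow> 'm) \<Rightarrow> ('m \<Rightarrow> 'm) set" where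
  "AV_ops smul actA actV = alg_gen smul (range actA \<union> actV ` Der)"

primrec pow_apply :: "('k::field \<Rightarrow> 'm \<Rightarrow> 'm::ab_group_add) \<Rightarrow> ('m \<Rightarrow> 'm) set \<Rightarrow> 'm set \<Rightarrow> nat \<Rightarrow> 'm set" where
  "pow_apply smul C M0 0 = module.span smul M0"
| "pow_apply smul C M0 (Suc m) = module.span smul (\<Union>T\<in>C. T ` pow_apply smul C M0 m)"

definition fin_dim_subspace :: "('k::field \<Rightarrow> 'b \<Rightarrow> 'b::ab_group_add) \<Rightarrow> 'b set \<Rightarrow> bool" where
  "fin_dim_subspace sc W \<longleftrightarrow> (\<exists>B. finite B \<and> W = module.span sc B)"

definition gk_growth :: "('k::field \<Rightarrow> 'm \<Rightarrow> 'm::ab_group_add) \<Rightarrow> ('m \<Rightarrow> 'm) set \<Rightarrow> 'm set \<Rightarrow> ereal" where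
  "gk_growth smul C M0 =
     limsup (\<lambda>m. ereal (log (real m) (real (vector_space.dim smul (pow_apply smul C M0 m)))))"

text \<open>Pairs (C, M_0): C a finite-dimensional generating subspace (containing 1) of the
  algebra (through its image in End_k(M)), M_0 a finite-dimensional generating subspace of M.\<close>
definition gen_pairs ::
  "('k::field \<Rightarrow> 'm::ab_group_add \<Rightarrow> 'm) \<Rightarrow> (('n, 'k) mpoly \<Rightarrow> 'm \<Rightarrow> 'm)
     \<Rightarrow> ((('n, 'k) mpoly \<Rightarrow> ('n, 'k) mpoly) \<Rightarrow> 'm \<Rightarrow> 'm) \<Rightarrow> (('m \<Rightarrow> 'm) set \<times> 'm set) set" where
  "gen_pairs smul actA actV =
     {(C, M0). fin_dim_subspace (op_smul smul) C \<and> id \<in> C \<and> C \<subseteq> AV_ops smul actA actV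
        \<and> alg_gen smul C = AV_ops smul actA actV
        \<and> fin_dim_subspace smul M0
        \<and> module.span smul (\<Union>T\<in>AV_ops smul actA actV. T ` M0) = UNIV}"

definition fg_AV_module ::
  "('k::field \<Rightarrow> 'm::ab_group_add \<Rightarrow> 'm) \<Rightarrow> (('n, 'k) mpoly \<Rightarrow> 'm \<Rightarrow> 'm)
     \<Rightarrow> ((('n, 'k) mpoly \<Rightarrow> ('n, 'k) mpoly) \<Rightarrow> 'm \<Rightarrow> 'm) \<Rightarrow> bool" where
  "fg_AV_module smul actA actV \<longleftrightarrow>
     (\<exists>F. finite F \<and> module.span smul (\<Union>T\<in>AV_ops smul actA actV. T ` F) = UNIV)"

definition GKdim_AV ::
  "('k::field \<Rightarrow> 'm::ab_group_add \<Rightarrow> 'm) \<Rightarrow> (('n, 'k) mpoly \<Rightarrow> 'm \<Rightarrow> 'm)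
     \<Rightarrow> ((('n, 'k) mpoly \<Rightarrow> ('n, 'k) mpoly) \<Rightarrow> 'm \<Rightarrow> 'm) \<Rightarrow> ereal" where
  "GKdim_AV smul actA actV =
     (SUP p \<in> gen_pairs smul actA actV. gk_growth smul (fst p) (snd p))"

definition holonomic ::
  "('k::field \<Rightarrow> 'm::ab_group_add \<Rightarrow> 'm) \<Rightarrow> (('n::finite, 'k) mpoly \<Rightarrow> 'm \<Rightarrow> 'm)
     \<Rightarrow> ((('n, 'k) mpoly \<Rightarrow> ('n, 'k) mpoly) \<Rightarrow> 'm \<Rightarrow> 'm) \<Rightarrow> bool" where
  "holonomic smul actA actV \<longleftrightarrow> fg_AV_module smul actA actV \<and>
     ((UNIV :: 'm set) = {0} \<or> GKdim_AV smul actA actV = ereal (real (card (UNIV :: 'n set))))"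

end

theory Submission
  imports Defs "HOL-Library.FuncSet" "HOL-Real_Asymp.Real_Asymp"
begin

text \<open>
  Let \<open>G\<close> be a finite set of \<open>A\<close>-module generators of \<open>M\<close>, and filter \<open>M\<close> by the subspaces
  \<open>F\<^sub>k = \<Sum>\<^sub>g A\<^sub>k g\<close>, where \<open>A\<^sub>k\<close> is spanned by the monomials of degree at most \<open>k\<close> in each variable.
  Multiplication by a polynomial and the action of a derivation raise the filtration degree by a
  bounded amount, so for any generating pair \<open>(C, M\<^sub>0)\<close> the space \<open>C\<^sup>m M\<^sub>0\<close> lies in some \<open>F\<^sub>k\<^sub>0\<^sub>+\<^sub>m\<^sub>b\<close>,
  whose dimension is \<open>O(m\<^sup>n)\<close>: the growth is at most \<open>n\<close>.

  Conversely, the monomial vector fields \<open>x\<^sup>a \<partial>\<^sub>i\<close> with \<open>|a| \<le> 3\<close> generate all of them under brackets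
  (characteristic 0), so together with the monomials \<open>x\<^sup>a\<close> with exponents in \<open>{0,1}\<close> they span a
  finite-dimensional generating subspace \<open>C\<^sub>0\<close> of the algebra, and \<open>C\<^sub>0\<^sup>m (span G)\<close> contains all
  \<open>x\<^sup>a g\<close> with exponents at most \<open>m\<close>. A nonzero \<open>AV\<close>-module is faithful over \<open>A\<close>: if \<open>f \<noteq> 0\<close> kills
  \<open>M\<close> then so does \<open>\<partial>\<^sub>i f\<close>, and differentiating down to a nonzero constant shows \<open>M = 0\<close>.
  Hence the \<open>(m+1)\<^sup>n\<close> operators \<open>x\<^sup>a|\<^sub>G\<close> are linearly independent, which gives
  \<open>dim C\<^sub>0\<^sup>m (span G) \<ge> (m+1)\<^sup>n / |G|\<close> and growth at least \<open>n\<close>.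
\<close>

section \<open>Polynomials and derivations\<close>

abbreviation lookup where "lookup \<equiv> Poly_Mapping.lookup"
abbreviation keys where "keys \<equiv> Poly_Mapping.keys"

definition monom_mp :: "('n \<Rightarrow>\<^sub>0 nat) \<Rightarrow> ('n, 'k::comm_ring_1) mpoly" where
  "monom_mp a = Poly_Mapping.single a 1"

definition unit_exp :: "'n \<Rightarrow> ('n \<Rightarrow>\<^sub>0 nat)" where
  "unit_exp i = Poly_Mapping.single i 1"

definition var_mp :: "'n \<Rightarrow> ('n, 'k::comm_ring_1) mpoly" where
  "var_mp i = monom_mp (unit_exp i)"

definition total_deg :: "('n::finite \<Rightarrow>\<^sub>0 nat) \<Rightarrow> nat" where
  "total_deg a = (\<Sum>i\<in>UNIV. lookup a i)"

lemma sum_fun_apply: "(\<Sum>i\<in>I. f i) x = (\<Sum>i\<in>I. f i x)"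
  by (induction I rule: infinite_finite_induct) auto

lemma constA_mult_lookup: "lookup (constA c * p) k = c * lookup p k"
  unfolding constA_def mult_map_scale_conv_mult[symmetric]
  by (simp add: Poly_Mapping.map.rep_eq when_def)

lemma constA_add: "constA (c + d) = constA c + constA d"
  by (simp add: constA_def single_add)

lemma constA_mult: "constA (c * d) = (constA c * constA d :: ('n, 'k::comm_ring_1) mpoly)"
  by (simp add: constA_def mult_single)

lemma constA_0 [simp]: "constA 0 = 0"
  by (simp add: constA_def)

lemma constA_1 [simp]: "constA 1 = 1"
  by (simp add: constA_def)

lemma constA_diff: "constA (c - d) = constA c - constA d"
  by (simp add: constA_def single_diff)

lemma monom_mp_add: "monom_mp (a + b) = (monom_mp a * monom_mp b :: ('n, 'k::comm_ring_1) mpoly)"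
  by (simp add: monom_mp_def mult_single)

lemma monom_mp_0 [simp]: "monom_mp 0 = 1"
  by (simp add: monom_mp_def)

lemma monom_mp_inj:
  assumes "(monom_mp a :: ('n, 'k::comm_ring_1) mpoly) = monom_mp b"
  shows "a = b"
proof -
  have "lookup (monom_mp a :: ('n, 'k) mpoly) a = 1" by (simp add: monom_mp_def)
  then have "lookup (monom_mp b :: ('n, 'k) mpoly) a = 1" using assms by simp
  then show ?thesis by (simp add: monom_mp_def lookup_single when_def split: if_splits)
qed

lemma lookup_constA_monom: "lookup (constA c * monom_mp b) t = (if b = t then c else 0)"
  by (simp add: constA_mult_lookup monom_mp_def lookup_single when_def)

lemma mpoly_monom_expansion: "p = (\<Sum>a\<in>keys p. constA (lookup p a) * monom_mp a)"
proof (rule poly_mapping_eqI)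
  fix k
  have "lookup (\<Sum>a\<in>keys p. constA (lookup p a) * monom_mp a) k = (if k \<in> keys p then lookup p k else 0)"
    by (simp add: Poly_Mapping.lookup_sum lookup_constA_monom sum.delta)
  then show "lookup p k = lookup (\<Sum>a\<in>keys p. constA (lookup p a) * monom_mp a) k"
    by (simp add: in_keys_iff)
qed

lemma lookup_unit_exp: "lookup (unit_exp i) j = (if i = j then 1 else 0)"
  by (simp add: unit_exp_def lookup_single when_def)

lemma diff_unit_exp_add: "0 < lookup b i \<Longrightarrow> b - unit_exp i + unit_exp i = b"
  by (rule poly_mapping_eqI) (auto simp: lookup_add lookup_minus lookup_unit_exp)

lemma add_diff_unit_exp: "0 < lookup b i \<Longrightarrow> a + (b - unit_exp i) = a + b - unit_exp i"
  by (rule poly_mapping_eqI) (auto simp: lookup_add lookup_minus lookup_unit_exp)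

lemma exp_nonzero_split:
  assumes "(a::'n \<Rightarrow>\<^sub>0 nat) \<noteq> 0"
  obtains i where "0 < lookup a i" "a = (a - unit_exp i) + unit_exp i"
proof -
  from assms obtain i where "lookup a i \<noteq> 0" by (metis poly_mapping_eqI lookup_zero)
  then show ?thesis using that[of i] diff_unit_exp_add[of a i] by simp
qed

lemma total_deg_diff_unit_exp:
  assumes "0 < lookup a i"
  shows "total_deg (a - unit_exp i) < total_deg a"
proof -
  have "total_deg a = (\<Sum>j\<in>UNIV. lookup (a - unit_exp i) j + (if i = j then 1 else 0))"
    unfolding total_deg_def by (rule sum.cong) (use assms in \<open>auto simp: lookup_minus lookup_unit_exp\<close>)
  also have "\<dots> = total_deg (a - unit_exp i) + 1"
    by (simp add: total_deg_def sum.distrib)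
  finally show ?thesis by simp
qed

lemma total_deg_unit_exp_add: "total_deg (unit_exp k + unit_exp l :: 'n::finite \<Rightarrow>\<^sub>0 nat) = 2"
  by (simp add: total_deg_def lookup_add lookup_unit_exp sum.distrib)

lemma total_deg_eq_0_iff: "total_deg a = 0 \<longleftrightarrow> a = 0"
  by (auto simp: total_deg_def intro!: poly_mapping_eqI)

lemma exists_other_exp:
  assumes "lookup c i < total_deg c"
  obtains k where "k \<noteq> i" "0 < lookup c k"
proof -
  have "total_deg c = (\<Sum>j\<in>{i}. lookup c j)" if "\<forall>k. k \<noteq> i \<longrightarrow> lookup c k = 0"
    unfolding total_deg_def by (rule sum.mono_neutral_right) (use that in auto)
  then show ?thesis using assms that by fastforce
qed

definition linear_ext :: "(('n \<Rightarrow>\<^sub>0 nat) \<Rightarrow> ('n, 'k::comm_ring_1) mpoly) \<Rightarrow> ('n, 'k) mpoly \<Rightarrow> ('n, 'k) mpoly" where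
  "linear_ext h p = (\<Sum>a\<in>keys p. constA (lookup p a) * h a)"

lemma linear_ext_superset:
  assumes "finite K" "keys p \<subseteq> K"
  shows "linear_ext h p = (\<Sum>a\<in>K. constA (lookup p a) * h a)"
  unfolding linear_ext_def
  by (rule sum.mono_neutral_left[OF assms]) (auto simp: in_keys_iff)

lemma linear_ext_add: "linear_ext h (p + q) = linear_ext h p + linear_ext h q"
proof -
  have "keys (p + q) \<subseteq> keys p \<union> keys q" by (simp add: keys_add)
  then show ?thesis
    by (simp add: linear_ext_superset[of "keys p \<union> keys q"] lookup_add constA_add distrib_right sum.distrib)
qed

lemma linear_ext_constA_mult: "linear_ext h (constA c * p) = constA c * linear_ext h p"
proof -
  have "keys (constA c * p) \<subseteq> keys p" by (auto simp: in_keys_iff constA_mult_lookup)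
  then show ?thesis
    by (simp add: linear_ext_superset[of "keys p"] constA_mult_lookup constA_mult sum_distrib_left mult.assoc)
qed

lemma linear_ext_monom [simp]: "linear_ext h (monom_mp a) = h a"
  by (simp add: linear_ext_def monom_mp_def)

lemma linear_ext_0 [simp]: "linear_ext h 0 = 0"
  by (simp add: linear_ext_def)

lemma linear_ext_sum: "linear_ext h (\<Sum>i\<in>I. f i) = (\<Sum>i\<in>I. linear_ext h (f i))"
  by (induction I rule: infinite_finite_induct) (auto simp: linear_ext_add)

lemma linear_ext_mult:
  assumes leibniz: "\<And>a b. h (a + b) = monom_mp a * h b + monom_mp b * h a"
  shows "linear_ext h (p * q) = p * linear_ext h q + q * linear_ext h p"
proof -
  let ?P = "keys p" and ?Q = "keys q"
  let ?c = "\<lambda>a b. constA (lookup p a * lookup q b)"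
  have pq: "p * q = (\<Sum>a\<in>?P. \<Sum>b\<in>?Q. ?c a b * monom_mp (a + b))"
    apply (subst mpoly_monom_expansion[of p], subst mpoly_monom_expansion[of q])
    by (simp add: sum_product constA_mult monom_mp_add algebra_simps)
  have "linear_ext h (p * q) = (\<Sum>a\<in>?P. \<Sum>b\<in>?Q. ?c a b * h (a + b))"
    by (simp add: pq linear_ext_sum linear_ext_constA_mult)
  also have "\<dots> = (\<Sum>a\<in>?P. \<Sum>b\<in>?Q. ?c a b * (monom_mp a * h b))
     + (\<Sum>a\<in>?P. \<Sum>b\<in>?Q. ?c a b * (monom_mp b * h a))"
    by (simp add: leibniz distrib_left sum.distrib)
  also have "(\<Sum>a\<in>?P. \<Sum>b\<in>?Q. ?c a b * (monom_mp a * h b)) = p * linear_ext h q"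
    apply (subst (3) mpoly_monom_expansion[of p])
    by (simp add: linear_ext_def sum_product constA_mult algebra_simps)
  also have "(\<Sum>a\<in>?P. \<Sum>b\<in>?Q. ?c a b * (monom_mp b * h a)) = q * linear_ext h p"
    apply (subst (3) mpoly_monom_expansion[of q])
    apply (simp add: linear_ext_def sum_product constA_mult algebra_simps)
    by (rule sum.swap)
  finally show ?thesis .
qed

lemma DerI:
  assumes "\<And>p q. D (p + q) = D p + D q" "\<And>c p. D (constA c * p) = constA c * D p"
    "\<And>p q. D (p * q) = p * D q + q * D p"
  shows "D \<in> Der"
  using assms unfolding Der_def by blast

lemma DerD:
  assumes "D \<in> Der"
  shows "D (p + q) = D p + D q" "D (constA c * p) = constA c * D p" "D (p * q) = p * D q + q * D p"
  using assms unfolding Der_def by blast+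

lemma linear_ext_Der:
  assumes "\<And>a b. h (a + b) = monom_mp a * h b + monom_mp b * h a"
  shows "linear_ext h \<in> Der"
  by (intro DerI linear_ext_add linear_ext_constA_mult linear_ext_mult assms)

lemma Der_1: "D \<in> Der \<Longrightarrow> D 1 = 0"
  using DerD(3)[of D 1 1] by simp

lemma Der_0: "D \<in> Der \<Longrightarrow> D 0 = 0"
  using DerD(1)[of D 0 0] by simp

lemma Der_sum: "D \<in> Der \<Longrightarrow> D (\<Sum>i\<in>I. f i) = (\<Sum>i\<in>I. D (f i))"
  by (induction I rule: infinite_finite_induct) (auto simp: Der_0 DerD(1))

lemma Der_eq_linear_ext: "D \<in> Der \<Longrightarrow> D = linear_ext (\<lambda>a. D (monom_mp a))"
  by (rule ext, subst mpoly_monom_expansion) (simp add: Der_sum DerD(2) linear_ext_def)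

lemma Der_add: assumes "D \<in> Der" "E \<in> Der" shows "(\<lambda>p. D p + E p) \<in> Der"
proof (rule DerI)
  fix p q c
  show "D (p + q) + E (p + q) = D p + E p + (D q + E q)"
    using DerD(1)[OF assms(1)] DerD(1)[OF assms(2)] by simp
  show "D (constA c * p) + E (constA c * p) = constA c * (D p + E p)"
    using DerD(2)[OF assms(1), of c p] DerD(2)[OF assms(2), of c p] by (simp add: distrib_left)
  show "D (p * q) + E (p * q) = p * (D q + E q) + q * (D p + E p)"
    using DerD(3)[OF assms(1), of p q] DerD(3)[OF assms(2), of p q] by (simp add: algebra_simps)
qed

lemma Der_diff: assumes "D \<in> Der" "E \<in> Der" shows "(\<lambda>p. D p - E p) \<in> Der"
proof (rule DerI)
  fix p q c
  show "D (p + q) - E (p + q) = D p - E p + (D q - E q)"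
    using DerD(1)[OF assms(1)] DerD(1)[OF assms(2)] by simp
  show "D (constA c * p) - E (constA c * p) = constA c * (D p - E p)"
    using DerD(2)[OF assms(1), of c p] DerD(2)[OF assms(2), of c p] by (simp add: right_diff_distrib)
  show "D (p * q) - E (p * q) = p * (D q - E q) + q * (D p - E p)"
    using DerD(3)[OF assms(1), of p q] DerD(3)[OF assms(2), of p q] by (simp add: algebra_simps)
qed

lemma Der_constA_mult: assumes "D \<in> Der" shows "(\<lambda>p. constA c * D p) \<in> Der"
proof (rule DerI)
  fix p q d
  show "constA c * D (p + q) = constA c * D p + constA c * D q"
    using DerD(1)[OF assms] by (simp add: distrib_left)
  show "constA c * D (constA d * p) = constA d * (constA c * D p)"
    using DerD(2)[OF assms, of d p] by (simp add: mult.left_commute)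
  show "constA c * D (p * q) = p * (constA c * D q) + q * (constA c * D p)"
    using DerD(3)[OF assms, of p q] by (simp add: algebra_simps)
qed

lemma Der_zero: "(\<lambda>p. 0) \<in> Der"
  by (rule DerI) simp_all

lemma Der_sum_fun: "(\<And>i. i \<in> I \<Longrightarrow> F i \<in> Der) \<Longrightarrow> (\<lambda>p. \<Sum>i\<in>I. F i p) \<in> Der"
  by (induction I rule: infinite_finite_induct) (auto simp: Der_zero intro!: Der_add)

lemma Der_lie_bracket: assumes "D \<in> Der" "E \<in> Der" shows "lie_bracket D E \<in> Der"
  unfolding lie_bracket_def
proof (rule DerI)
  fix p q c
  show "D (E (p + q)) - E (D (p + q)) = D (E p) - E (D p) + (D (E q) - E (D q))"
    using DerD(1)[OF assms(1)] DerD(1)[OF assms(2)] by simp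
  show "D (E (constA c * p)) - E (D (constA c * p)) = constA c * (D (E p) - E (D p))"
    using DerD(2)[OF assms(1)] DerD(2)[OF assms(2)] by (simp add: right_diff_distrib)
  show "D (E (p * q)) - E (D (p * q)) = p * (D (E q) - E (D q)) + q * (D (E p) - E (D p))"
    using DerD(1,3)[OF assms(1)] DerD(1,3)[OF assms(2)] by (simp add: algebra_simps)
qed

section \<open>Vector fields\<close>

text \<open>\<open>field_on_monom g a\<close> is \<open>(\<Sum>\<^sub>i g\<^sub>i \<partial>\<^sub>i) x\<^sup>a\<close>. The coefficient \<open>a\<^sub>i\<close> vanishes exactly when the
  truncated exponent \<open>a - e\<^sub>i\<close> is wrong.\<close>

definition field_on_monom :: "('n::finite \<Rightarrow> ('n, 'k::comm_ring_1) mpoly) \<Rightarrow> ('n \<Rightarrow>\<^sub>0 nat) \<Rightarrow> ('n, 'k) mpoly" where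
  "field_on_monom g a = (\<Sum>i\<in>UNIV. constA (of_nat (lookup a i)) * monom_mp (a - unit_exp i) * g i)"

definition vector_field :: "('n::finite \<Rightarrow> ('n, 'k::comm_ring_1) mpoly) \<Rightarrow> ('n, 'k) mpoly \<Rightarrow> ('n, 'k) mpoly" where
  "vector_field g = linear_ext (field_on_monom g)"

lemma field_on_monom_add:
  fixes g :: "'n::finite \<Rightarrow> ('n, 'k::comm_ring_1) mpoly"
  shows "field_on_monom g (a + b) = monom_mp a * field_on_monom g b + monom_mp b * field_on_monom g a"
proof -
  have shift: "constA (of_nat (lookup b i)) * monom_mp (a + b - unit_exp i) * x
      = monom_mp a * (constA (of_nat (lookup b i)) * monom_mp (b - unit_exp i) * x)"
    for a b i and x :: "('n, 'k) mpoly"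
  proof (cases "lookup b i = 0")
    case False
    then show ?thesis by (simp add: add_diff_unit_exp[symmetric] monom_mp_add ac_simps)
  qed simp
  have "field_on_monom g (a + b)
      = (\<Sum>i\<in>UNIV. constA (of_nat (lookup b i)) * monom_mp (a + b - unit_exp i) * g i)
      + (\<Sum>i\<in>UNIV. constA (of_nat (lookup a i)) * monom_mp (b + a - unit_exp i) * g i)"
    by (simp add: field_on_monom_def lookup_add constA_add algebra_simps sum.distrib add.commute)
  also have "\<dots> = monom_mp a * field_on_monom g b + monom_mp b * field_on_monom g a"
    by (simp only: shift field_on_monom_def sum_distrib_left)
  finally show ?thesis .
qed

lemma vector_field_Der: "vector_field g \<in> Der"
  unfolding vector_field_def by (rule linear_ext_Der[OF field_on_monom_add])

lemma field_on_monom_unit_exp: "field_on_monom g (unit_exp j) = g j"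
proof -
  have "field_on_monom g (unit_exp j) = (\<Sum>i\<in>UNIV. if i = j then g j else 0)"
    unfolding field_on_monom_def by (rule sum.cong) (auto simp: lookup_unit_exp)
  then show ?thesis by simp
qed

lemma vector_field_var: "vector_field g (var_mp j) = g j"
  by (simp add: vector_field_def var_mp_def field_on_monom_unit_exp)

lemma Der_monom:
  assumes "D \<in> Der"
  shows "D (monom_mp a) = field_on_monom (\<lambda>i. D (var_mp i)) a"
proof (induction "total_deg a" arbitrary: a rule: less_induct)
  case less
  show ?case
  proof (cases "a = 0")
    case True
    then show ?thesis by (simp add: Der_1[OF assms] field_on_monom_def)
  next
    case False
    then obtain i where i: "0 < lookup a i" "a = (a - unit_exp i) + unit_exp i"
      by (rule exp_nonzero_split)
    have IH: "D (monom_mp (a - unit_exp i)) = field_on_monom (\<lambda>i. D (var_mp i)) (a - unit_exp i)"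
      using less total_deg_diff_unit_exp[OF i(1)] by blast
    have "D (monom_mp a) = D (monom_mp (a - unit_exp i) * var_mp i)"
      by (subst i(2)) (simp add: monom_mp_add var_mp_def)
    also have "\<dots> = monom_mp (a - unit_exp i) * D (var_mp i) + var_mp i * D (monom_mp (a - unit_exp i))"
      by (rule DerD(3)[OF assms])
    also have "\<dots> = field_on_monom (\<lambda>i. D (var_mp i)) ((a - unit_exp i) + unit_exp i)"
      by (simp add: field_on_monom_add field_on_monom_unit_exp IH var_mp_def)
    finally show ?thesis using i(2) by simp
  qed
qed

lemma Der_eq_vector_field: "D \<in> Der \<Longrightarrow> D = vector_field (\<lambda>i. D (var_mp i))"
  by (subst Der_eq_linear_ext) (simp_all add: Der_monom vector_field_def)

lemma Der_eqI:
  fixes D E :: "('n::finite, 'k::field) mpoly \<Rightarrow> ('n, 'k) mpoly"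
  assumes "D \<in> Der" "E \<in> Der" "\<And>j. D (var_mp j) = E (var_mp j)"
  shows "D = E"
  using Der_eq_vector_field[OF assms(1)] Der_eq_vector_field[OF assms(2)] assms(3) by simp

lemma vector_field_add: "vector_field (\<lambda>i. g i + h i) p = vector_field g p + vector_field h p"
proof -
  have "field_on_monom (\<lambda>i. g i + h i) a = field_on_monom g a + field_on_monom h a" for a
    by (simp add: field_on_monom_def algebra_simps sum.distrib)
  then show ?thesis by (simp add: vector_field_def linear_ext_def algebra_simps sum.distrib)
qed

lemma vector_field_constA_mult: "vector_field (\<lambda>i. constA c * g i) p = constA c * vector_field g p"
proof -
  have "field_on_monom (\<lambda>i. constA c * g i) a = constA c * field_on_monom g a" for a
    by (simp add: field_on_monom_def algebra_simps sum_distrib_left)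
  then show ?thesis by (simp add: vector_field_def linear_ext_def algebra_simps sum_distrib_left)
qed

lemma vector_field_sum: "vector_field (\<lambda>i. \<Sum>j\<in>J. G j i) p = (\<Sum>j\<in>J. vector_field (G j) p)"
proof (induction J rule: infinite_finite_induct)
  case (infinite J)
  then show ?case using vector_field_constA_mult[of 0 "\<lambda>i. 0" p] by simp
next
  case empty
  then show ?case using vector_field_constA_mult[of 0 "\<lambda>i. 0" p] by simp
qed (simp add: vector_field_add)

definition monom_field :: "('n::finite \<Rightarrow>\<^sub>0 nat) \<Rightarrow> 'n \<Rightarrow> ('n, 'k::comm_ring_1) mpoly \<Rightarrow> ('n, 'k) mpoly" where
  "monom_field a i = vector_field (\<lambda>j. if j = i then monom_mp a else 0)"

abbreviation partial_mp :: "'n::finite \<Rightarrow> ('n, 'k::comm_ring_1) mpoly \<Rightarrow> ('n, 'k) mpoly" where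
  "partial_mp \<equiv> monom_field 0"

lemma monom_field_Der: "monom_field a i \<in> Der"
  by (simp add: monom_field_def vector_field_Der)

lemma monom_field_0 [simp]: "monom_field a i 0 = 0"
  by (simp add: monom_field_def vector_field_def)

lemma monom_field_var: "monom_field a i (var_mp j) = (if j = i then monom_mp a else 0)"
  by (simp add: monom_field_def vector_field_var)

lemma monom_field_monom:
  "monom_field b l (monom_mp a) = constA (of_nat (lookup a l)) * monom_mp (a - unit_exp l + b)"
proof -
  have "monom_field b l (monom_mp a) = (\<Sum>k\<in>UNIV. if k = l
      then constA (of_nat (lookup a l)) * monom_mp (a - unit_exp l) * monom_mp b else 0)"
    unfolding monom_field_def vector_field_def linear_ext_monom field_on_monom_def
    by (rule sum.cong) auto
  then show ?thesis by (simp add: monom_mp_add mult.assoc)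
qed

lemma vector_field_monom_field_expansion:
  "vector_field g p = (\<Sum>l\<in>UNIV. \<Sum>a\<in>keys (g l). constA (lookup (g l) a) * monom_field a l p)"
proof -
  have "g = (\<lambda>i. \<Sum>l\<in>UNIV. \<Sum>a\<in>keys (g l). constA (lookup (g l) a) * (if i = l then monom_mp a else 0))"
  proof
    fix i
    have "(\<Sum>l\<in>UNIV. \<Sum>a\<in>keys (g l). constA (lookup (g l) a) * (if i = l then monom_mp a else 0))
       = (\<Sum>l\<in>UNIV. if i = l then (\<Sum>a\<in>keys (g l). constA (lookup (g l) a) * monom_mp a) else 0)"
      by (rule sum.cong) auto
    then show "g i = (\<Sum>l\<in>UNIV. \<Sum>a\<in>keys (g l). constA (lookup (g l) a) * (if i = l then monom_mp a else 0))"
      by (simp flip: mpoly_monom_expansion)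
  qed
  then have "vector_field g p = vector_field (\<lambda>i. \<Sum>l\<in>UNIV. \<Sum>a\<in>keys (g l).
      constA (lookup (g l) a) * (if i = l then monom_mp a else 0)) p"
    by (rule arg_cong)
  then show ?thesis by (simp add: vector_field_sum vector_field_constA_mult monom_field_def)
qed

lemma monom_field_bracket:
  fixes a b :: "'n::finite \<Rightarrow>\<^sub>0 nat"
  shows "lie_bracket (monom_field b l) (monom_field a i :: ('n, 'k::field) mpoly \<Rightarrow> _)
    = (\<lambda>p. constA (of_nat (lookup a l)) * monom_field (a - unit_exp l + b) i p
       - constA (of_nat (lookup b i)) * monom_field (b - unit_exp i + a) l p)"
proof (rule Der_eqI)
  show "lie_bracket (monom_field b l) (monom_field a i) \<in> Der"
    by (intro Der_lie_bracket monom_field_Der)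
  show "(\<lambda>p. constA (of_nat (lookup a l)) * monom_field (a - unit_exp l + b) i p
       - constA (of_nat (lookup b i)) * monom_field (b - unit_exp i + a) l p) \<in> Der"
    by (intro Der_diff Der_constA_mult monom_field_Der)
qed (simp add: lie_bracket_def monom_field_var monom_field_monom)

text \<open>With \<open>e = e\<^sub>i + e\<^sub>k\<close> and \<open>b = c - e\<^sub>k\<close> one gets
  \<open>[x\<^sup>e \<partial>\<^sub>i, x\<^sup>b \<partial>\<^sub>i] = (b\<^sub>i - e\<^sub>i) x\<^sup>c \<partial>\<^sub>i\<close>, which lowers the degree of the second field by one;
  when \<open>|c| > 3\<close>, some \<open>k\<close> with \<open>c\<^sub>k > 0\<close> makes the coefficient nonzero.\<close>

lemma monom_field_bracket_reduction:
  assumes "0 < lookup c k"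
  shows "lie_bracket (monom_field (unit_exp i + unit_exp k) i) (monom_field (c - unit_exp k) i :: ('n::finite, 'k::field) mpoly \<Rightarrow> _)
    = (\<lambda>p. constA (of_nat (lookup (c - unit_exp k) i) - of_nat (lookup (unit_exp i + unit_exp k) i))
         * monom_field c i p)"
proof -
  let ?e = "unit_exp i + unit_exp k" and ?b = "c - unit_exp k"
  have e: "?e - unit_exp i + ?b = c"
    using assms by (intro poly_mapping_eqI) (auto simp: lookup_add lookup_minus lookup_unit_exp)
  have b: "lookup ?b i = 0 \<or> ?b - unit_exp i + ?e = c"
  proof (cases "lookup ?b i = 0")
    case False
    then show ?thesis
      using assms by (intro disjI2 poly_mapping_eqI) (auto simp: lookup_add lookup_minus lookup_unit_exp)
  qed simp
  show ?thesis
    unfolding monom_field_bracket e using b by (auto simp: fun_eq_iff constA_diff left_diff_distrib)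
qed

lemma exists_reducing_direction:
  assumes "3 < total_deg c"
  obtains k where "0 < lookup c k" "lookup (c - unit_exp k) i \<noteq> lookup (unit_exp i + unit_exp k) i"
proof (cases "lookup c i = 0 \<or> lookup c i = 3")
  case True
  then have "lookup c i < total_deg c" using assms by auto
  then obtain k where k: "k \<noteq> i" "0 < lookup c k" by (rule exists_other_exp)
  then have "lookup (c - unit_exp k) i = lookup c i" "lookup (unit_exp i + unit_exp k) i = 1"
    by (simp_all add: lookup_minus lookup_add lookup_unit_exp)
  then show ?thesis using True k(2) by (intro that[of k]) auto
next
  case False
  then have "lookup (c - unit_exp i) i = lookup c i - 1" "lookup (unit_exp i + unit_exp i) i = 2"
    by (simp_all add: lookup_minus lookup_add lookup_unit_exp)
  then show ?thesis using False by (intro that[of i]) auto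
qed

section \<open>Degrees\<close>

definition exp_box :: "nat \<Rightarrow> ('n::finite \<Rightarrow>\<^sub>0 nat) set" where
  "exp_box k = {a. \<forall>i. lookup a i \<le> k}"

definition box_polys :: "nat \<Rightarrow> ('n::finite, 'k::comm_ring_1) mpoly set" where
  "box_polys k = {p. keys p \<subseteq> exp_box k}"

definition max_deg :: "('n::finite, 'k::comm_ring_1) mpoly \<Rightarrow> nat" where
  "max_deg f = Max (insert 0 (total_deg ` keys f))"

lemma lookup_image_exp_box: "lookup ` exp_box k = (\<Pi>\<^sub>E i\<in>(UNIV::'n::finite set). {..k})"
proof
  show "lookup ` exp_box k \<subseteq> (\<Pi>\<^sub>E i\<in>(UNIV::'n set). {..k})" by (auto simp: exp_box_def)
  show "(\<Pi>\<^sub>E i\<in>(UNIV::'n set). {..k}) \<subseteq> lookup ` exp_box k"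
  proof
    fix f :: "'n \<Rightarrow> nat" assume f: "f \<in> (\<Pi>\<^sub>E i\<in>(UNIV::'n set). {..k})"
    have "lookup (Abs_poly_mapping f) = f" by (simp add: Abs_poly_mapping_inverse)
    moreover have "Abs_poly_mapping f \<in> exp_box k" using f calculation by (auto simp: exp_box_def)
    ultimately show "f \<in> lookup ` exp_box k" by (metis image_eqI)
  qed
qed

lemma inj_lookup: "inj lookup"
  by (simp add: inj_def poly_mapping_eqI)

lemma finite_exp_box: "finite (exp_box k :: ('n::finite \<Rightarrow>\<^sub>0 nat) set)"
proof -
  have "finite (lookup ` (exp_box k :: ('n \<Rightarrow>\<^sub>0 nat) set))"
    unfolding lookup_image_exp_box by (rule finite_PiE) auto
  then show ?thesis using finite_imageD inj_lookup by (metis inj_on_subset subset_UNIV)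
qed

lemma card_exp_box: "card (exp_box k :: ('n::finite \<Rightarrow>\<^sub>0 nat) set) = (k + 1) ^ card (UNIV :: 'n set)"
proof -
  have "card (exp_box k :: ('n \<Rightarrow>\<^sub>0 nat) set) = card (lookup ` (exp_box k :: ('n \<Rightarrow>\<^sub>0 nat) set))"
    by (metis card_image inj_lookup inj_on_subset subset_UNIV)
  then show ?thesis unfolding lookup_image_exp_box by (simp add: card_PiE)
qed

lemma exp_box_0 [simp]: "0 \<in> exp_box k"
  by (simp add: exp_box_def)

lemma unit_exp_in_exp_box: "unit_exp i \<in> exp_box 1"
  by (simp add: exp_box_def lookup_unit_exp)

lemma exp_box_mono: "k \<le> j \<Longrightarrow> exp_box k \<subseteq> exp_box j"
  by (auto simp: exp_box_def intro: order.trans)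

lemma exp_box_add: "a \<in> exp_box k \<Longrightarrow> b \<in> exp_box j \<Longrightarrow> a + b \<in> exp_box (k + j)"
  by (auto simp: exp_box_def lookup_add add_mono)

lemma exp_box_diff: "a \<in> exp_box k \<Longrightarrow> a - b \<in> exp_box k"
  by (auto simp: exp_box_def lookup_minus intro: order.trans[OF diff_le_self])

lemma exp_box_of_total_deg: "total_deg a \<le> k \<Longrightarrow> a \<in> exp_box k"
  unfolding total_deg_def exp_box_def
  by (auto intro: order.trans[OF member_le_sum[of _ UNIV "lookup a"]])

lemma exp_box_Suc_split:
  assumes "a \<in> exp_box (Suc m)"
  obtains a1 a2 where "a1 \<in> exp_box 1" "a2 \<in> exp_box m" "a = a1 + a2"
proof -
  define a1 :: "'a \<Rightarrow>\<^sub>0 nat" where "a1 = Abs_poly_mapping (\<lambda>i. if 0 < lookup a i then 1 else 0)"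
  have l1: "lookup a1 = (\<lambda>i. if 0 < lookup a i then 1 else 0)"
    by (simp add: a1_def Abs_poly_mapping_inverse)
  have "a1 \<in> exp_box 1" by (simp add: exp_box_def l1)
  moreover have "a - a1 \<in> exp_box m"
    using assms by (auto simp: exp_box_def lookup_minus l1 le_diff_conv)
  moreover have "a = a1 + (a - a1)"
    by (rule poly_mapping_eqI) (simp add: lookup_add lookup_minus l1)
  ultimately show ?thesis by (rule that)
qed

lemma box_polys_0 [simp]: "0 \<in> box_polys k"
  by (simp add: box_polys_def)

lemma box_polys_mono: "k \<le> j \<Longrightarrow> p \<in> box_polys k \<Longrightarrow> p \<in> box_polys j"
  using exp_box_mono by (auto simp: box_polys_def)

lemma box_polys_add: "p \<in> box_polys k \<Longrightarrow> q \<in> box_polys k \<Longrightarrow> p + q \<in> box_polys k"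
  using keys_add[of p q] by (auto simp: box_polys_def)

lemma box_polys_constA_mult: "p \<in> box_polys k \<Longrightarrow> constA c * p \<in> box_polys k"
  unfolding box_polys_def subset_iff in_keys_iff constA_mult_lookup mem_Collect_eq
  by (metis mult_zero_right)

lemma box_polys_sum: "(\<And>i. i \<in> I \<Longrightarrow> f i \<in> box_polys k) \<Longrightarrow> (\<Sum>i\<in>I. f i) \<in> box_polys k"
  by (induction I rule: infinite_finite_induct) (auto intro: box_polys_add)

lemma box_polys_mult: "p \<in> box_polys k \<Longrightarrow> q \<in> box_polys j \<Longrightarrow> p * q \<in> box_polys (k + j)"
  using keys_mult[of p q] exp_box_add by (fastforce simp: box_polys_def)

lemma monom_in_box_polys: "a \<in> exp_box k \<Longrightarrow> (monom_mp a :: ('n::finite, 'k::comm_ring_1) mpoly) \<in> box_polys k"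
  by (simp add: box_polys_def monom_mp_def)

lemma constA_in_box_polys: "(constA c :: ('n::finite, 'k::comm_ring_1) mpoly) \<in> box_polys k"
  by (cases "c = 0") (simp_all add: box_polys_def constA_def)

lemma finite_ex_common_bound:
  fixes P :: "'a \<Rightarrow> nat \<Rightarrow> bool"
  assumes "finite I" "\<And>i. i \<in> I \<Longrightarrow> \<exists>k. P i k" "\<And>i k j. P i k \<Longrightarrow> k \<le> j \<Longrightarrow> P i j"
  shows "\<exists>k. \<forall>i\<in>I. P i k"
proof -
  obtain f where f: "\<And>i. i \<in> I \<Longrightarrow> P i (f i)" using assms(2) by metis
  have "P i (\<Sum>j\<in>I. f j)" if "i \<in> I" for i
    by (rule assms(3)[OF f[OF that]]) (rule member_le_sum[OF that _ assms(1)], simp)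
  then show ?thesis by blast
qed

lemma ex_box_polys: "\<exists>k. (p::('n::finite, 'k::comm_ring_1) mpoly) \<in> box_polys k"
proof -
  let ?k = "\<Sum>a\<in>keys p. total_deg a"
  have "p \<in> box_polys ?k" unfolding box_polys_def
  proof (intro CollectI subsetI)
    fix a assume "a \<in> keys p"
    then have "total_deg a \<le> ?k" by (intro member_le_sum) auto
    then show "a \<in> exp_box ?k" by (rule exp_box_of_total_deg)
  qed
  then show ?thesis by blast
qed

lemma Der_box_polys_shift:
  assumes D: "(D :: ('n::finite, 'k::field) mpoly \<Rightarrow> _) \<in> Der"
  obtains e where "\<And>k p. p \<in> box_polys k \<Longrightarrow> D p \<in> box_polys (k + e)"
proof -
  have "\<exists>e. \<forall>i\<in>UNIV. D (var_mp i) \<in> box_polys e"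
    by (rule finite_ex_common_bound) (auto intro: ex_box_polys box_polys_mono)
  then obtain e where e: "\<And>i. D (var_mp i) \<in> box_polys e" by auto
  have "D p \<in> box_polys (k + e)" if p: "p \<in> box_polys k" for k p
  proof -
    have "D p = linear_ext (field_on_monom (\<lambda>i. D (var_mp i))) p"
      by (subst Der_eq_vector_field[OF D]) (simp add: vector_field_def)
    also have "\<dots> \<in> box_polys (k + e)" unfolding linear_ext_def field_on_monom_def
    proof (intro box_polys_sum box_polys_constA_mult)
      fix a i assume "a \<in> keys p"
      then have "a - unit_exp i \<in> exp_box k" using p exp_box_diff by (auto simp: box_polys_def)
      then show "constA (of_nat (lookup a i)) * monom_mp (a - unit_exp i) * D (var_mp i) \<in> box_polys (k + e)"
        by (simp add: mult.assoc box_polys_constA_mult box_polys_mult monom_in_box_polys e)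
    qed
    finally show ?thesis .
  qed
  then show ?thesis by (rule that)
qed

lemma total_deg_le_max_deg: "a \<in> keys f \<Longrightarrow> total_deg a \<le> max_deg f"
  unfolding max_deg_def by (rule Max_ge) auto

lemma max_deg_less:
  assumes "\<And>a. a \<in> keys f \<Longrightarrow> total_deg a < d" "0 < d"
  shows "max_deg f < d"
  unfolding max_deg_def using assms by (subst Max_less_iff) auto

lemma max_deg_attained:
  assumes "f \<noteq> 0"
  obtains a where "a \<in> keys f" "total_deg a = max_deg f"
proof -
  have "max_deg f \<in> insert 0 (total_deg ` keys f)" unfolding max_deg_def by (rule Max_in) auto
  moreover have "keys f \<noteq> {}" using assms by simp
  ultimately show ?thesis
    using that total_deg_le_max_deg by (metis insertE image_iff le_zero_eq ex_in_conv)
qed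

lemma max_deg_0_imp_const:
  assumes "max_deg (f :: ('n::finite, 'k::comm_ring_1) mpoly) = 0"
  shows "f = constA (lookup f 0)"
proof -
  have "keys f \<subseteq> {0}"
  proof
    fix a assume "a \<in> keys f"
    then have "total_deg a = 0" using total_deg_le_max_deg[of a f] assms by simp
    then show "a \<in> {0}" by (simp add: total_deg_eq_0_iff)
  qed
  then have "f = (\<Sum>a\<in>{0}. constA (lookup f a) * monom_mp a)"
    by (subst mpoly_monom_expansion) (rule sum.mono_neutral_left, auto simp: in_keys_iff)
  then show ?thesis by simp
qed

lemma lookup_partial_mp:
  "lookup (partial_mp i f :: ('n::finite, 'k::comm_ring_1) mpoly) t
    = (\<Sum>a\<in>keys f. if a - unit_exp i = t then lookup f a * of_nat (lookup a i) else 0)"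
proof -
  have "partial_mp i f = linear_ext (\<lambda>a. partial_mp i (monom_mp a)) f"
    by (simp add: monom_field_def vector_field_def)
  also have "\<dots> = (\<Sum>a\<in>keys f. constA (lookup f a * of_nat (lookup a i)) * monom_mp (a - unit_exp i))"
    by (simp add: linear_ext_def monom_field_monom constA_mult mult.assoc)
  finally show ?thesis by (simp add: Poly_Mapping.lookup_sum lookup_constA_monom)
qed

lemma partial_mp_lowers_max_deg:
  assumes f: "(f :: ('n::finite, 'k::field_char_0) mpoly) \<noteq> 0" and d: "0 < max_deg f"
  obtains i where "partial_mp i f \<noteq> 0" "max_deg (partial_mp i f) < max_deg f"
proof -
  obtain a0 where a0: "a0 \<in> keys f" "total_deg a0 = max_deg f" by (rule max_deg_attained[OF f])
  then have "a0 \<noteq> 0" using d total_deg_eq_0_iff[of a0] by simp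
  then obtain i where i: "0 < lookup a0 i" by (metis exp_nonzero_split)
  have "lookup (partial_mp i f) (a0 - unit_exp i) = (\<Sum>a\<in>keys f. if a = a0 then lookup f a0 * of_nat (lookup a0 i) else 0)"
    unfolding lookup_partial_mp
    by (rule sum.cong[OF refl]) (metis (no_types, lifting) i diff_unit_exp_add mult_eq_0_iff of_nat_0 gr0I)
  also have "\<dots> \<noteq> 0" using a0(1) i by (simp add: in_keys_iff)
  finally have "partial_mp i f \<noteq> 0" by auto
  moreover have "max_deg (partial_mp i f) < max_deg f"
  proof (rule max_deg_less[OF _ d])
    fix t assume t: "t \<in> keys (partial_mp i f)"
    obtain a where a: "a \<in> keys f" "0 < lookup a i" "t = a - unit_exp i"
    proof (rule ccontr)
      assume "\<not> thesis"
      then have "lookup (partial_mp i f) t = 0"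
        unfolding lookup_partial_mp using that by (intro sum.neutral) auto
      then show False using t by (simp add: in_keys_iff)
    qed
    then show "total_deg t < max_deg f"
      using total_deg_diff_unit_exp[OF a(2)] total_deg_le_max_deg[OF a(1)] by simp
  qed
  ultimately show ?thesis by (rule that)
qed

section \<open>Algebras of operators\<close>

locale operator_space = vs: vector_space smul for smul :: "'k::field \<Rightarrow> 'm::ab_group_add \<Rightarrow> 'm"
begin

sublocale op: vector_space "op_smul smul"
  unfolding vector_space_def op_smul_def
  by (auto simp: fun_eq_iff vs.scale_right_distrib vs.scale_left_distrib)

lemma op_smul_apply [simp]: "op_smul smul c T x = smul c (T x)"
  by (simp add: op_smul_def)

definition lin_op :: "('m \<Rightarrow> 'm) \<Rightarrow> bool" where
  "lin_op T \<longleftrightarrow> (\<forall>x y. T (x + y) = T x + T y) \<and> (\<forall>c x. T (smul c x) = smul c (T x))"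

lemma lin_op_foldr_comp: "(\<And>x. x \<in> set ws \<Longrightarrow> lin_op x) \<Longrightarrow> lin_op (foldr (\<circ>) ws id)"
  by (induction ws) (auto simp: lin_op_def)

lemma subspace_lin_op: "op.subspace {T. lin_op T}"
  unfolding op.subspace_def lin_op_def
  by (auto simp: vs.scale_right_distrib vs.scale_scale mult.commute)

lemma lin_op_span: "(\<And>x. x \<in> X \<Longrightarrow> lin_op x) \<Longrightarrow> T \<in> op.span X \<Longrightarrow> lin_op T"
  using op.span_minimal[of X "{T. lin_op T}"] subspace_lin_op by auto

definition words :: "('m \<Rightarrow> 'm) set \<Rightarrow> ('m \<Rightarrow> 'm) set" where
  "words X = {foldr (\<circ>) ws id | ws. set ws \<subseteq> X}"

lemma alg_gen_eq_span_words: "alg_gen smul X = op.span (words X)"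
  by (simp add: alg_gen_def words_def)

lemma words_comp: "S \<in> words X \<Longrightarrow> T \<in> words X \<Longrightarrow> S \<circ> T \<in> words X"
proof -
  assume "S \<in> words X" "T \<in> words X"
  then obtain ws vs where "S = foldr (\<circ>) ws id" "set ws \<subseteq> X" "T = foldr (\<circ>) vs id" "set vs \<subseteq> X"
    by (auto simp: words_def)
  moreover have "foldr (\<circ>) ws id \<circ> foldr (\<circ>) vs id = foldr (\<circ>) (ws @ vs) id"
    by (induction ws) (auto simp: fun_eq_iff)
  ultimately show ?thesis unfolding words_def by (auto intro!: exI[of _ "ws @ vs"])
qed

lemma mem_alg_gen: "x \<in> X \<Longrightarrow> x \<in> alg_gen smul X"
  unfolding alg_gen_eq_span_words words_def
  by (rule op.span_base) (rule CollectI, rule exI[of _ "[x]"], simp)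

lemma id_in_alg_gen: "id \<in> alg_gen smul X"
  unfolding alg_gen_eq_span_words words_def
  by (rule op.span_base) (rule CollectI, rule exI[of _ "[]"], simp)

lemma subspace_alg_gen: "op.subspace (alg_gen smul X)"
  unfolding alg_gen_eq_span_words by simp

lemma alg_gen_diff: "S \<in> alg_gen smul X \<Longrightarrow> T \<in> alg_gen smul X \<Longrightarrow> S - T \<in> alg_gen smul X"
  unfolding alg_gen_eq_span_words by (rule op.span_diff)

lemma alg_gen_scale: "S \<in> alg_gen smul X \<Longrightarrow> op_smul smul c S \<in> alg_gen smul X"
  unfolding alg_gen_eq_span_words by (rule op.span_scale)

lemma alg_gen_sum: "(\<And>i. i \<in> I \<Longrightarrow> S i \<in> alg_gen smul X) \<Longrightarrow> (\<Sum>i\<in>I. S i) \<in> alg_gen smul X"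
  unfolding alg_gen_eq_span_words by (rule op.span_sum)

lemma alg_gen_linear_closed:
  assumes add: "\<And>S T. F (S + T) = F S + F T"
    and scale: "\<And>c S. F (op_smul smul c S) = op_smul smul c (F S)"
    and words: "\<And>W. W \<in> words X \<Longrightarrow> F W \<in> alg_gen smul X"
    and T: "T \<in> alg_gen smul X"
  shows "F T \<in> alg_gen smul X"
proof -
  have "F 0 = 0" using add[of 0 0] by simp
  then have "op.subspace {T. F T \<in> alg_gen smul X}"
    using subspace_alg_gen by (auto simp: op.subspace_def add scale)
  with T[unfolded alg_gen_eq_span_words] have "T \<in> {T. F T \<in> alg_gen smul X}"
    by (rule op.span_subspace_induct) (simp add: words)
  then show ?thesis by simp
qed

lemma alg_gen_comp:
  assumes lin: "\<And>x. x \<in> X \<Longrightarrow> lin_op x"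
    and S: "S \<in> alg_gen smul X" and T: "T \<in> alg_gen smul X"
  shows "S \<circ> T \<in> alg_gen smul X"
proof -
  have word_comp: "W \<circ> T \<in> alg_gen smul X" if W: "W \<in> words X" for W
  proof -
    have lW: "lin_op W" using W lin by (auto simp: words_def intro!: lin_op_foldr_comp)
    show ?thesis
    proof (rule alg_gen_linear_closed[of "\<lambda>T. W \<circ> T", OF _ _ _ T])
      show "W \<circ> (U + V) = (W \<circ> U) + (W \<circ> V)" for U V
        using lW by (simp add: lin_op_def fun_eq_iff)
      show "W \<circ> op_smul smul c U = op_smul smul c (W \<circ> U)" for c U
        using lW by (simp add: lin_op_def fun_eq_iff)
      show "W \<circ> V \<in> alg_gen smul X" if "V \<in> words X" for V
        unfolding alg_gen_eq_span_words by (intro op.span_base words_comp[OF W that])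
    qed
  qed
  show ?thesis
    by (rule alg_gen_linear_closed[of "\<lambda>S. S \<circ> T", OF _ _ word_comp S]) (simp_all add: fun_eq_iff)
qed

lemma alg_gen_subset:
  assumes "\<And>x. x \<in> X \<Longrightarrow> lin_op x" "Y \<subseteq> alg_gen smul X"
  shows "alg_gen smul Y \<subseteq> alg_gen smul X"
proof -
  have "foldr (\<circ>) ws id \<in> alg_gen smul X" if "set ws \<subseteq> Y" for ws
    using that by (induction ws) (auto simp: id_in_alg_gen intro!: alg_gen_comp[OF assms(1)] dest: subsetD[OF assms(2)])
  then show ?thesis
    unfolding alg_gen_eq_span_words[of Y]
    by (intro op.span_minimal) (auto simp: words_def alg_gen_eq_span_words)
qed

lemma pow_apply_filtration:
  assumes "\<And>k. vs.subspace (F k)" "M0 \<subseteq> F k0"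
    and "\<And>T k x. T \<in> C \<Longrightarrow> x \<in> F k \<Longrightarrow> T x \<in> F (k + b)"
  shows "pow_apply smul C M0 m \<subseteq> F (k0 + m * b)"
proof (induction m)
  case 0
  then show ?case using assms(1,2) by (simp add: vs.span_minimal)
next
  case (Suc m)
  then have "(\<Union>T\<in>C. T ` pow_apply smul C M0 m) \<subseteq> F (k0 + m * b + b)"
    using assms(3) by blast
  then have "vs.span (\<Union>T\<in>C. T ` pow_apply smul C M0 m) \<subseteq> F (k0 + m * b + b)"
    by (rule vs.span_minimal[OF _ assms(1)])
  then show ?case by (simp add: algebra_simps)
qed

end

section \<open>\<open>AV\<close>-modules\<close>

locale av_module =
  fixes smul :: "'k::field_char_0 \<Rightarrow> 'm::ab_group_add \<Rightarrow> 'm"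
    and actA :: "('n::finite, 'k) mpoly \<Rightarrow> 'm \<Rightarrow> 'm"
    and actV :: "(('n, 'k) mpoly \<Rightarrow> ('n, 'k) mpoly) \<Rightarrow> 'm \<Rightarrow> 'm"
  assumes AV: "AV_module smul actA actV"
begin

sublocale operator_space smul
  by (rule operator_space.intro) (use AV in \<open>simp add: AV_module_def\<close>)

lemma actA_mult: "actA (f * g) m = actA f (actA g m)"
  and actA_add: "actA (f + g) m = actA f m + actA g m"
  and actA_add_right: "actA f (m + m') = actA f m + actA f m'"
  and actA_constA: "actA (constA c) m = smul c m"
  using AV unfolding AV_module_def by auto

lemma actV_add: "D \<in> Der \<Longrightarrow> E \<in> Der \<Longrightarrow> actV (\<lambda>p. D p + E p) m = actV D m + actV E m"
  and actV_constA_mult: "D \<in> Der \<Longrightarrow> actV (\<lambda>p. constA c * D p) m = smul c (actV D m)"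
  and actV_add_right: "D \<in> Der \<Longrightarrow> actV D (m + m') = actV D m + actV D m'"
  and actV_scale: "D \<in> Der \<Longrightarrow> actV D (smul c m) = smul c (actV D m)"
  and actV_lie_bracket: "D \<in> Der \<Longrightarrow> E \<in> Der \<Longrightarrow>
    actV (lie_bracket D E) m = actV D (actV E m) - actV E (actV D m)"
  and actV_actA: "D \<in> Der \<Longrightarrow> actV D (actA f m) = actA (D f) m + actA f (actV D m)"
  using AV unfolding AV_module_def by auto

lemma actA_1: "actA 1 m = m"
  using actA_constA[of 1 m] by simp

lemma actA_0: "actA 0 m = 0"
  using actA_add[of 0 0 m] by simp

lemma actA_zero_right: "actA f 0 = 0"
  using actA_add_right[of f 0 0] by simp

lemma actA_diff: "actA (f - h) x = actA f x - actA h x"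
  using actA_add[of "f - h" h x] by (simp add: eq_diff_eq)

lemma actA_scale: "actA f (smul c m) = smul c (actA f m)"
  by (metis actA_constA actA_mult mult.commute)

lemma actA_constA_mult: "actA (constA c * f) m = smul c (actA f m)"
  by (simp add: actA_mult actA_constA)

lemma actA_sum: "actA (\<Sum>i\<in>I. f i) m = (\<Sum>i\<in>I. actA (f i) m)"
  by (induction I rule: infinite_finite_induct) (auto simp: actA_0 actA_add)

lemma actA_sum_right: "actA f (\<Sum>i\<in>I. g i) = (\<Sum>i\<in>I. actA f (g i))"
  by (induction I rule: infinite_finite_induct) (auto simp: actA_zero_right actA_add_right)

lemma actA_commute: "actA f (actA g m) = actA g (actA f m)"
  by (metis actA_mult mult.commute)

lemma actA_eq_monom_sum: "actA f = (\<Sum>a\<in>keys f. op_smul smul (lookup f a) (actA (monom_mp a)))"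
  by (rule ext, subst mpoly_monom_expansion[of f]) (simp add: actA_sum actA_constA_mult sum_fun_apply)

lemma actV_zero_right: "D \<in> Der \<Longrightarrow> actV D 0 = 0"
  using actV_add_right[of D 0 0] by simp

lemma actV_sum_right: "D \<in> Der \<Longrightarrow> actV D (\<Sum>i\<in>I. g i) = (\<Sum>i\<in>I. actV D (g i))"
  by (induction I rule: infinite_finite_induct) (auto simp: actV_zero_right actV_add_right)

lemma actV_sum: "(\<And>j. j \<in> J \<Longrightarrow> F j \<in> Der) \<Longrightarrow> actV (\<lambda>p. \<Sum>j\<in>J. F j p) m = (\<Sum>j\<in>J. actV (F j) m)"
proof (induction J rule: infinite_finite_induct)
  case (insert x J)
  have "actV (\<lambda>p. \<Sum>j\<in>insert x J. F j p) m = actV (\<lambda>p. F x p + (\<Sum>j\<in>J. F j p)) m"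
    using insert by simp
  also have "\<dots> = actV (F x) m + actV (\<lambda>p. \<Sum>j\<in>J. F j p) m"
    using insert by (intro actV_add Der_sum_fun) auto
  finally show ?case using insert by simp
qed (use actV_add[OF Der_zero Der_zero] in auto)

lemma actV_eq_monom_field_sum:
  assumes D: "D \<in> Der"
  shows "actV D = (\<Sum>l\<in>UNIV. \<Sum>a\<in>keys (D (var_mp l)). op_smul smul (lookup (D (var_mp l)) a) (actV (monom_field a l)))"
proof
  fix m
  let ?g = "\<lambda>i. D (var_mp i)"
  have "D = (\<lambda>p. \<Sum>l\<in>UNIV. \<Sum>a\<in>keys (?g l). constA (lookup (?g l) a) * monom_field a l p)"
    by (subst Der_eq_vector_field[OF D]) (rule ext, rule vector_field_monom_field_expansion)
  then have "actV D m = actV (\<lambda>p. \<Sum>l\<in>UNIV. \<Sum>a\<in>keys (?g l). constA (lookup (?g l) a) * monom_field a l p) m"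
    by (rule arg_cong[where f = "\<lambda>E. actV E m"])
  also have "\<dots> = (\<Sum>l\<in>UNIV. \<Sum>a\<in>keys (?g l). actV (\<lambda>p. constA (lookup (?g l) a) * monom_field a l p) m)"
    by (simp add: actV_sum Der_sum_fun Der_constA_mult monom_field_Der)
  also have "\<dots> = (\<Sum>l\<in>UNIV. \<Sum>a\<in>keys (?g l). op_smul smul (lookup (?g l) a) (actV (monom_field a l)) m)"
    by (simp add: actV_constA_mult[OF monom_field_Der])
  finally show "actV D m = (\<Sum>l\<in>UNIV. \<Sum>a\<in>keys (?g l). op_smul smul (lookup (?g l) a) (actV (monom_field a l))) m"
    by (simp add: sum_fun_apply)
qed

definition AV_gens :: "('m \<Rightarrow> 'm) set" where
  "AV_gens = range actA \<union> actV ` Der"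

lemma AV_ops_eq: "AV_ops smul actA actV = alg_gen smul AV_gens"
  by (simp add: AV_ops_def AV_gens_def)

lemma lin_op_AV_gens: "x \<in> AV_gens \<Longrightarrow> lin_op x"
  by (auto simp: AV_gens_def lin_op_def actA_add_right actA_scale actV_add_right actV_scale)

lemma actA_in_AV_ops: "actA f \<in> AV_ops smul actA actV"
  unfolding AV_ops_eq by (rule mem_alg_gen) (simp add: AV_gens_def)

definition basic_gens :: "('m \<Rightarrow> 'm) set" where
  "basic_gens = actA ` monom_mp ` exp_box 1 \<union> (\<lambda>(a, i). actV (monom_field a i)) ` ({a. total_deg a \<le> 3} \<times> UNIV)"

definition basic_ops :: "('m \<Rightarrow> 'm) set" where
  "basic_ops = op.span basic_gens"

lemma finite_basic_gens: "finite basic_gens"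
proof -
  have "{a::'n \<Rightarrow>\<^sub>0 nat. total_deg a \<le> 3} \<subseteq> exp_box 3" using exp_box_of_total_deg by blast
  then have "finite {a::'n \<Rightarrow>\<^sub>0 nat. total_deg a \<le> 3}" using finite_exp_box finite_subset by blast
  then show ?thesis unfolding basic_gens_def using finite_exp_box by auto
qed

lemma fin_dim_basic_ops: "fin_dim_subspace (op_smul smul) basic_ops"
  unfolding fin_dim_subspace_def basic_ops_def using finite_basic_gens by blast

lemma basic_gens_subset: "basic_gens \<subseteq> AV_gens"
  unfolding basic_gens_def AV_gens_def using monom_field_Der by auto

lemma lin_op_basic_ops: "x \<in> basic_ops \<Longrightarrow> lin_op x"
  using lin_op_span[of basic_gens x] basic_gens_subset lin_op_AV_gens unfolding basic_ops_def by blast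

lemma basic_ops_subset_AV_ops: "basic_ops \<subseteq> AV_ops smul actA actV"
  unfolding basic_ops_def AV_ops_eq
  by (rule op.span_minimal) (use basic_gens_subset mem_alg_gen subspace_alg_gen in auto)

lemma actA_monom_in_basic_ops: "a \<in> exp_box 1 \<Longrightarrow> actA (monom_mp a) \<in> basic_ops"
  unfolding basic_ops_def basic_gens_def by (intro op.span_base) blast

lemma id_in_basic_ops: "id \<in> basic_ops"
proof -
  have "actA (monom_mp 0) = id" by (simp add: fun_eq_iff actA_1)
  then show ?thesis using actA_monom_in_basic_ops[OF exp_box_0] by simp
qed

lemma basic_gens_in_alg_gen: "x \<in> basic_gens \<Longrightarrow> x \<in> alg_gen smul basic_ops"
  by (rule mem_alg_gen) (simp add: basic_ops_def op.span_base)

lemma actA_in_alg_gen_basic: "actA f \<in> alg_gen smul basic_ops"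
proof -
  have "actA (monom_mp a) \<in> alg_gen smul basic_ops" for a
  proof (induction "total_deg a" arbitrary: a rule: less_induct)
    case less
    show ?case
    proof (cases "a = 0")
      case True
      have "actA (monom_mp 0) \<in> basic_gens" unfolding basic_gens_def using exp_box_0 by blast
      then show ?thesis using True basic_gens_in_alg_gen by blast
    next
      case False
      then obtain i where i: "0 < lookup a i" "a = (a - unit_exp i) + unit_exp i"
        by (rule exp_nonzero_split)
      have "actA (monom_mp a) = actA (monom_mp (a - unit_exp i)) \<circ> actA (monom_mp (unit_exp i))"
        by (subst i(2)) (simp add: monom_mp_add actA_mult fun_eq_iff)
      moreover have "actA (monom_mp (unit_exp i)) \<in> alg_gen smul basic_ops"
        by (intro mem_alg_gen actA_monom_in_basic_ops unit_exp_in_exp_box)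
      ultimately show ?thesis
        using less total_deg_diff_unit_exp[OF i(1)] alg_gen_comp[OF lin_op_basic_ops] by simp
    qed
  qed
  then show ?thesis
    by (subst actA_eq_monom_sum) (auto intro!: alg_gen_sum alg_gen_scale)
qed

lemma actV_in_alg_gen_of_bracket:
  assumes D: "D \<in> Der" and E: "E \<in> Der" and F: "F \<in> Der"
    and bracket: "lie_bracket D E = (\<lambda>p. constA \<gamma> * F p)" and "\<gamma> \<noteq> 0"
    and "actV D \<in> alg_gen smul basic_ops" "actV E \<in> alg_gen smul basic_ops"
  shows "actV F \<in> alg_gen smul basic_ops"
proof -
  have "op_smul smul \<gamma> (actV F) = (actV D \<circ> actV E) - (actV E \<circ> actV D)"
    using actV_lie_bracket[OF D E] actV_constA_mult[OF F] by (simp add: fun_eq_iff bracket)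
  also have "\<dots> \<in> alg_gen smul basic_ops"
    by (intro alg_gen_diff alg_gen_comp[OF lin_op_basic_ops] assms(6,7))
  finally have "op_smul smul (inverse \<gamma>) (op_smul smul \<gamma> (actV F)) \<in> alg_gen smul basic_ops"
    by (rule alg_gen_scale)
  then show ?thesis using \<open>\<gamma> \<noteq> 0\<close> by (simp add: op_smul_def)
qed

lemma monom_field_in_alg_gen_basic: "actV (monom_field c i) \<in> alg_gen smul basic_ops"
proof (induction "total_deg c" arbitrary: c rule: less_induct)
  case less
  show ?case
  proof (cases "total_deg c \<le> 3")
    case True
    then show ?thesis by (intro basic_gens_in_alg_gen) (force simp: basic_gens_def)
  next
    case False
    then have "3 < total_deg c" by simp
    then obtain k where k: "0 < lookup c k"
      and ne: "lookup (c - unit_exp k) i \<noteq> lookup (unit_exp i + unit_exp k) i"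
      by (rule exists_reducing_direction)
    have "actV (monom_field (unit_exp i + unit_exp k) i) \<in> alg_gen smul basic_ops"
      by (intro basic_gens_in_alg_gen) (force simp: basic_gens_def total_deg_unit_exp_add)
    moreover have "actV (monom_field (c - unit_exp k) i) \<in> alg_gen smul basic_ops"
      using less total_deg_diff_unit_exp[OF k] by blast
    ultimately show ?thesis
      using ne by (intro actV_in_alg_gen_of_bracket[OF monom_field_Der monom_field_Der monom_field_Der
          monom_field_bracket_reduction[OF k]]) simp_all
  qed
qed

lemma AV_ops_eq_alg_gen_basic: "alg_gen smul basic_ops = AV_ops smul actA actV"
proof
  show "alg_gen smul basic_ops \<subseteq> AV_ops smul actA actV"
    unfolding AV_ops_eq by (rule alg_gen_subset[OF lin_op_AV_gens basic_ops_subset_AV_ops[unfolded AV_ops_eq]])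
  have "AV_gens \<subseteq> alg_gen smul basic_ops"
    using actA_in_alg_gen_basic monom_field_in_alg_gen_basic actV_eq_monom_field_sum
    by (auto simp: AV_gens_def intro!: alg_gen_sum alg_gen_scale)
  then show "AV_ops smul actA actV \<subseteq> alg_gen smul basic_ops"
    using alg_gen_subset[of basic_ops AV_gens] lin_op_basic_ops by (simp add: AV_ops_eq)
qed

text \<open>If \<open>f\<close> annihilates the module then so does every \<open>\<partial>\<^sub>i f\<close>, since \<open>\<partial>\<^sub>i (f m) = (\<partial>\<^sub>i f) m + f (\<partial>\<^sub>i m)\<close>.\<close>

lemma annihilator_zero:
  fixes x :: 'm
  assumes "\<And>x. actA f x = 0" "f \<noteq> 0"
  shows "x = 0"
  using assms
proof (induction "max_deg f" arbitrary: f rule: less_induct)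
  case less
  show ?case
  proof (cases "max_deg f = 0")
    case True
    then have f: "f = constA (lookup f 0)" by (rule max_deg_0_imp_const)
    then have "lookup f 0 \<noteq> 0" using less.prems(2) by (metis constA_0)
    moreover have "smul (lookup f 0) x = 0" using less.prems(1)[of x] f by (metis actA_constA)
    ultimately show ?thesis by simp
  next
    case False
    then obtain i where i: "partial_mp i f \<noteq> 0" "max_deg (partial_mp i f) < max_deg f"
      using partial_mp_lowers_max_deg[OF less.prems(2)] by auto
    have "actA (partial_mp i f) y = 0" for y
      using actV_actA[OF monom_field_Der, of 0 i f y] less.prems(1) actV_zero_right[OF monom_field_Der] by simp
    then show ?thesis using less.hyps[OF i(2)] i(1) by blast
  qed
qed

end

section \<open>Logarithmic growth\<close>

lemma tendsto_log_mult_power: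
  fixes c :: real
  assumes "0 < c"
  shows "((\<lambda>m::nat. log (real m) (c * real m ^ n)) \<longlongrightarrow> real n) sequentially"
  using assms by real_asymp

lemma limsup_log_le_of_poly_bound:
  fixes f :: "nat \<Rightarrow> nat" and c :: real
  assumes c: "1 \<le> c" and bound: "eventually (\<lambda>m. real (f m) \<le> c * real m ^ n) sequentially"
  shows "limsup (\<lambda>m. ereal (log (real m) (real (f m)))) \<le> ereal (real n)"
proof -
  have "eventually (\<lambda>m. ereal (log (real m) (real (f m))) \<le> ereal (log (real m) (c * real m ^ n))) sequentially"
    using bound eventually_ge_at_top[of 2]
  proof eventually_elim
    case (elim m)
    have "1 * 1 \<le> c * real m ^ n"
      using c elim(2) by (intro mult_mono one_le_power) auto
    show ?case
    proof (cases "f m = 0")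
      case True
      have "0 \<le> log (real m) (c * real m ^ n)" using \<open>1 * 1 \<le> _\<close> elim(2) by simp
      with True show ?thesis by (simp add: log_def)
    qed (use elim in \<open>auto intro!: log_mono\<close>)
  qed
  moreover have lim: "((\<lambda>m. ereal (log (real m) (c * real m ^ n))) \<longlongrightarrow> ereal (real n)) sequentially"
    using c by (intro tendsto_ereal tendsto_log_mult_power) simp
  ultimately have "limsup (\<lambda>m. ereal (log (real m) (real (f m)))) \<le> limsup (\<lambda>m. ereal (log (real m) (c * real m ^ n)))"
    by (intro Limsup_mono)
  also have "\<dots> = ereal (real n)"
    by (rule lim_imp_Limsup[OF _ lim]) simp
  finally show ?thesis .
qed

lemma limsup_log_ge_of_poly_bound:
  fixes f :: "nat \<Rightarrow> nat" and c :: real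
  assumes c: "0 < c" and bound: "eventually (\<lambda>m. real m ^ n \<le> c * real (f m)) sequentially"
  shows "ereal (real n) \<le> limsup (\<lambda>m. ereal (log (real m) (real (f m))))"
proof -
  have "((\<lambda>m. ereal (log (real m) (inverse c * real m ^ n))) \<longlongrightarrow> ereal (real n)) sequentially"
    using c by (intro tendsto_ereal tendsto_log_mult_power) simp
  then have "ereal (real n) = limsup (\<lambda>m. ereal (log (real m) (inverse c * real m ^ n)))"
    by (intro lim_imp_Limsup[symmetric]) simp_all
  also have "\<dots> \<le> limsup (\<lambda>m. ereal (log (real m) (real (f m))))"
  proof (rule Limsup_mono)
    show "eventually (\<lambda>m. ereal (log (real m) (inverse c * real m ^ n)) \<le> ereal (log (real m) (real (f m)))) sequentially"
      using bound eventually_ge_at_top[of 2]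
    proof eventually_elim
      case (elim m)
      have "inverse c * real m ^ n \<le> inverse c * (c * real (f m))"
        using elim(1) c by (intro mult_left_mono) auto
      moreover have "inverse c * (c * real (f m)) = real (f m)"
        using c by (simp add: mult.assoc[symmetric])
      ultimately have "inverse c * real m ^ n \<le> real (f m)" by simp
      moreover have "0 < inverse c * real m ^ n" using c elim(2) by simp
      ultimately show ?case using elim(2) by (simp add: log_mono)
    qed
  qed
  finally show ?thesis .
qed

section \<open>\<open>AV\<close>-modules finitely generated over \<open>A\<close>\<close>

locale fg_av_module = av_module smul actA actV
  for smul :: "'k::field_char_0 \<Rightarrow> 'm::ab_group_add \<Rightarrow> 'm"
    and actA :: "('n::finite, 'k) mpoly \<Rightarrow> 'm \<Rightarrow> 'm"
    and actV :: "(('n, 'k) mpoly \<Rightarrow> ('n, 'k) mpoly) \<Rightarrow> 'm \<Rightarrow> 'm" +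
  fixes G :: "'m set"
  assumes finite_gens: "finite G"
    and gens_span: "\<And>m. \<exists>c. m = (\<Sum>g\<in>G. actA (c g) g)"
begin

lemma actA_eq_0_of_gens:
  assumes "\<And>g. g \<in> G \<Longrightarrow> actA f g = 0"
  shows "actA f x = 0"
proof -
  obtain c where c: "x = (\<Sum>g\<in>G. actA (c g) g)" using gens_span by blast
  have "actA f x = (\<Sum>g\<in>G. actA (c g) (actA f g))" by (simp add: c actA_sum_right actA_commute)
  also have "\<dots> = 0" using assms by (simp add: actA_zero_right)
  finally show ?thesis .
qed

lemma actA_vanishing_on_gens_eq_0:
  assumes "(y::'m) \<noteq> 0" "\<And>g. g \<in> G \<Longrightarrow> actA f g = 0"
  shows "f = 0"
  using annihilator_zero[OF actA_eq_0_of_gens[OF assms(2)]] assms(1) by blast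

lemma span_AV_ops_image_eq_UNIV:
  assumes "G \<subseteq> M0"
  shows "vs.span (\<Union>T\<in>AV_ops smul actA actV. T ` M0) = UNIV"
proof -
  have "x \<in> vs.span (\<Union>T\<in>AV_ops smul actA actV. T ` M0)" for x
  proof -
    obtain c where c: "x = (\<Sum>g\<in>G. actA (c g) g)" using gens_span by blast
    show ?thesis unfolding c by (intro vs.span_sum vs.span_base) (use actA_in_AV_ops assms in blast)
  qed
  then show ?thesis by auto
qed

lemma fg_AV_module: "fg_AV_module smul actA actV"
  unfolding fg_AV_module_def using finite_gens span_AV_ops_image_eq_UNIV[of G] by blast

lemma fin_dim_span_gens: "fin_dim_subspace smul (vs.span G)"
  unfolding fin_dim_subspace_def using finite_gens by blast

definition filt :: "nat \<Rightarrow> 'm set" where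
  "filt k = {m. \<exists>c. (\<forall>g\<in>G. c g \<in> box_polys k) \<and> m = (\<Sum>g\<in>G. actA (c g) g)}"

lemma subspace_filt: "vs.subspace (filt k)"
  unfolding vs.subspace_def
proof (intro conjI ballI allI)
  show "0 \<in> filt k"
    unfolding filt_def by (rule CollectI, rule exI[of _ "\<lambda>g. 0"]) (simp add: actA_0)
next
  fix x y assume "x \<in> filt k" "y \<in> filt k"
  then obtain c d where "\<forall>g\<in>G. c g \<in> box_polys k" "x = (\<Sum>g\<in>G. actA (c g) g)"
    "\<forall>g\<in>G. d g \<in> box_polys k" "y = (\<Sum>g\<in>G. actA (d g) g)"
    by (auto simp: filt_def)
  then show "x + y \<in> filt k" unfolding filt_def
    by (intro CollectI exI[of _ "\<lambda>g. c g + d g"]) (simp add: box_polys_add actA_add sum.distrib)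
next
  fix a x assume "x \<in> filt k"
  then obtain c where "\<forall>g\<in>G. c g \<in> box_polys k" "x = (\<Sum>g\<in>G. actA (c g) g)"
    by (auto simp: filt_def)
  then show "smul a x \<in> filt k" unfolding filt_def
    by (intro CollectI exI[of _ "\<lambda>g. constA a * c g"])
      (simp add: box_polys_constA_mult actA_constA_mult vs.scale_sum_right)
qed

lemma filt_mono: "k \<le> j \<Longrightarrow> x \<in> filt k \<Longrightarrow> x \<in> filt j"
  unfolding filt_def using box_polys_mono by blast

lemma actA_filt: assumes "f \<in> box_polys j" "x \<in> filt k" shows "actA f x \<in> filt (k + j)"
proof -
  obtain c where "\<forall>g\<in>G. c g \<in> box_polys k" "x = (\<Sum>g\<in>G. actA (c g) g)"
    using assms by (auto simp: filt_def)
  then show ?thesis unfolding filt_def using assms(1)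
    by (intro CollectI exI[of _ "\<lambda>g. f * c g"]) (simp add: box_polys_mult actA_mult actA_sum_right add.commute)
qed

lemma ex_filt: "\<exists>k. x \<in> filt k"
proof -
  obtain c where c: "x = (\<Sum>g\<in>G. actA (c g) g)" using gens_span by blast
  obtain k where "\<forall>g\<in>G. c g \<in> box_polys k"
    using finite_ex_common_bound[OF finite_gens, of "\<lambda>g k. c g \<in> box_polys k"] ex_box_polys box_polys_mono
    by blast
  then show ?thesis using c unfolding filt_def by blast
qed

lemma ex_filt_bound: "finite X \<Longrightarrow> \<exists>k. X \<subseteq> filt k"
  using finite_ex_common_bound[of X "\<lambda>x k. x \<in> filt k"] ex_filt filt_mono by blast

lemma gens_in_filt_0: "g \<in> G \<Longrightarrow> g \<in> filt 0"
  unfolding filt_def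
proof (intro CollectI exI[of _ "\<lambda>h. if h = g then 1 else 0"] conjI)
  assume g: "g \<in> G"
  have "(1 :: ('n, 'k) mpoly) \<in> box_polys 0"
    using constA_in_box_polys[of 1 0] by simp
  then show "\<forall>h\<in>G. (if h = g then 1 else 0 :: ('n, 'k) mpoly) \<in> box_polys 0" by simp
  have "(\<Sum>h\<in>G. actA (if h = g then 1 else 0) h) = (\<Sum>h\<in>G. if h = g then g else 0)"
    by (rule sum.cong) (auto simp: actA_1 actA_0)
  then show "g = (\<Sum>h\<in>G. actA (if h = g then 1 else 0) h)" using g finite_gens by simp
qed

definition filt_spanning :: "nat \<Rightarrow> 'm set" where
  "filt_spanning k = (\<lambda>(a, g). actA (monom_mp a) g) ` (exp_box k \<times> G)"

lemma finite_filt_spanning: "finite (filt_spanning k)"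
  unfolding filt_spanning_def by (intro finite_imageI finite_cartesian_product finite_exp_box finite_gens)

lemma card_filt_spanning: "card (filt_spanning k) \<le> (k + 1) ^ card (UNIV :: 'n set) * card G"
proof -
  have "card (filt_spanning k) \<le> card ((exp_box k :: ('n \<Rightarrow>\<^sub>0 nat) set) \<times> G)"
    unfolding filt_spanning_def
    by (rule card_image_le) (intro finite_cartesian_product finite_exp_box finite_gens)
  then show ?thesis by (simp add: card_cartesian_product card_exp_box)
qed

lemma filt_subset_span: "filt k \<subseteq> vs.span (filt_spanning k)"
proof
  fix x assume "x \<in> filt k"
  then obtain c where c: "\<forall>g\<in>G. c g \<in> box_polys k" "x = (\<Sum>g\<in>G. actA (c g) g)" by (auto simp: filt_def)
  have "actA (c g) g \<in> vs.span (filt_spanning k)" if g: "g \<in> G" for g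
  proof -
    have "actA (c g) g = (\<Sum>a\<in>keys (c g). smul (lookup (c g) a) (actA (monom_mp a) g))"
      by (subst mpoly_monom_expansion[of "c g"]) (simp add: actA_sum actA_constA_mult)
    also have "\<dots> \<in> vs.span (filt_spanning k)"
    proof (intro vs.span_sum vs.span_scale vs.span_base)
      fix a assume "a \<in> keys (c g)"
      then have "a \<in> exp_box k" using c g by (auto simp: box_polys_def)
      then show "actA (monom_mp a) g \<in> filt_spanning k" unfolding filt_spanning_def using g by force
    qed
    finally show ?thesis .
  qed
  then show "x \<in> vs.span (filt_spanning k)" using c by (auto intro: vs.span_sum)
qed

definition raises_filt :: "('m \<Rightarrow> 'm) \<Rightarrow> nat \<Rightarrow> bool" where
  "raises_filt T b \<longleftrightarrow> (\<forall>k. \<forall>x\<in>filt k. T x \<in> filt (k + b))"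

lemma raises_filt_mono: "raises_filt T b \<Longrightarrow> b \<le> b' \<Longrightarrow> raises_filt T b'"
  unfolding raises_filt_def using filt_mono by (meson add_le_mono order_refl)

lemma subspace_raises_filt: "op.subspace {T. raises_filt T b}"
  using subspace_filt unfolding op.subspace_def vs.subspace_def raises_filt_def by auto

lemma subspace_ex_raises_filt: "op.subspace {T. \<exists>b. raises_filt T b}"
  unfolding op.subspace_def
proof (intro conjI ballI allI)
  show "0 \<in> {T. \<exists>b. raises_filt T b}"
    using subspace_raises_filt[of 0] by (auto simp: op.subspace_def)
  fix S T assume "S \<in> {T. \<exists>b. raises_filt T b}" "T \<in> {T. \<exists>b. raises_filt T b}"
  then obtain b1 b2 where "raises_filt S b1" "raises_filt T b2" by auto
  then have "raises_filt S (b1 + b2)" "raises_filt T (b1 + b2)" by (auto elim: raises_filt_mono)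
  then show "S + T \<in> {T. \<exists>b. raises_filt T b}"
    using subspace_raises_filt[of "b1 + b2"] by (auto simp: op.subspace_def)
next
  fix c T assume "T \<in> {T. \<exists>b. raises_filt T b}"
  then obtain b where "raises_filt T b" by auto
  then have "raises_filt (op_smul smul c T) b"
    using subspace_raises_filt[of b] by (auto simp: op.subspace_def)
  then show "op_smul smul c T \<in> {T. \<exists>b. raises_filt T b}" by blast
qed

lemma raises_filt_comp: "raises_filt S b \<Longrightarrow> raises_filt T b' \<Longrightarrow> raises_filt (S \<circ> T) (b' + b)"
  unfolding raises_filt_def by (metis add.assoc comp_apply)

lemma raises_filt_actV:
  assumes D: "D \<in> Der"
  shows "\<exists>b. raises_filt (actV D) b"
proof -
  obtain e where e: "\<And>k p. p \<in> box_polys k \<Longrightarrow> D p \<in> box_polys (k + e)"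
    using Der_box_polys_shift[OF D] by blast
  obtain s where s: "actV D ` G \<subseteq> filt s" using ex_filt_bound finite_gens by blast
  have "actV D x \<in> filt (k + (e + s))" if x: "x \<in> filt k" for k x
  proof -
    obtain c where c: "\<forall>g\<in>G. c g \<in> box_polys k" "x = (\<Sum>g\<in>G. actA (c g) g)" using x by (auto simp: filt_def)
    have "actV D x = (\<Sum>g\<in>G. actA (D (c g)) g + actA (c g) (actV D g))"
      by (simp add: c actV_sum_right[OF D] actV_actA[OF D])
    also have "\<dots> \<in> filt (k + (e + s))"
    proof (intro vs.subspace_sum[OF subspace_filt] vs.subspace_add[OF subspace_filt])
      fix g assume g: "g \<in> G"
      have "actA (D (c g)) g \<in> filt (0 + (k + e))" using actA_filt[OF _ gens_in_filt_0[OF g]] e c g by blast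
      then show "actA (D (c g)) g \<in> filt (k + (e + s))" by (rule filt_mono[rotated]) simp
      have "actA (c g) (actV D g) \<in> filt (s + k)" using actA_filt s c g by blast
      then show "actA (c g) (actV D g) \<in> filt (k + (e + s))" by (rule filt_mono[rotated]) simp
    qed
    finally show ?thesis .
  qed
  then show ?thesis unfolding raises_filt_def by blast
qed

lemma raises_filt_AV_ops: "T \<in> AV_ops smul actA actV \<Longrightarrow> \<exists>b. raises_filt T b"
  unfolding AV_ops_eq alg_gen_eq_span_words
proof (erule op.span_subspace_induct[OF _ subspace_ex_raises_filt, simplified])
  have gens: "\<exists>b. raises_filt T b" if "T \<in> AV_gens" for T
  proof (cases "T \<in> range actA")
    case True
    then obtain f where "T = actA f" by blast
    moreover obtain j where "f \<in> box_polys j" using ex_box_polys by blast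
    ultimately show ?thesis unfolding raises_filt_def using actA_filt by blast
  qed (use that raises_filt_actV in \<open>auto simp: AV_gens_def\<close>)
  fix W assume "W \<in> words AV_gens"
  then obtain ws where ws: "W = foldr (\<circ>) ws id" "set ws \<subseteq> AV_gens" by (auto simp: words_def)
  have "\<exists>b. raises_filt (foldr (\<circ>) ws id) b" using ws(2)
  proof (induction ws)
    case Nil
    show ?case by (rule exI[of _ 0]) (simp add: raises_filt_def)
  next
    case (Cons w ws)
    then obtain b b' where "raises_filt w b" "raises_filt (foldr (\<circ>) ws id) b'"
      using gens by (meson list.set_intros subsetD subset_code(1))
    then have "raises_filt (foldr (\<circ>) (w # ws) id) (b' + b)" by (simp add: raises_filt_comp)
    then show ?case by blast
  qed
  then show "\<exists>b. raises_filt W b" using ws by simp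
qed

lemma pow_apply_filt_bound:
  assumes "fin_dim_subspace (op_smul smul) C" "C \<subseteq> AV_ops smul actA actV" "fin_dim_subspace smul M0"
  obtains k0 b where "\<And>m. pow_apply smul C M0 m \<subseteq> filt (k0 + m * b)"
proof -
  obtain B where B: "finite B" "C = op.span B" "B \<subseteq> AV_ops smul actA actV"
    using assms(1,2) op.span_superset by (auto simp: fin_dim_subspace_def)
  obtain b where "\<forall>T\<in>B. raises_filt T b"
    using finite_ex_common_bound[OF B(1), of raises_filt] raises_filt_AV_ops raises_filt_mono B(3) by blast
  then have "C \<subseteq> {T. raises_filt T b}"
    unfolding B(2) by (intro op.span_minimal subspace_raises_filt) auto
  then have raises: "\<And>T k x. T \<in> C \<Longrightarrow> x \<in> filt k \<Longrightarrow> T x \<in> filt (k + b)"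
    by (auto simp: raises_filt_def)
  obtain B0 where B0: "finite B0" "M0 = vs.span B0"
    using assms(3) by (auto simp: fin_dim_subspace_def)
  obtain k0 where "B0 \<subseteq> filt k0" using ex_filt_bound[OF B0(1)] by blast
  then have "M0 \<subseteq> filt k0" unfolding B0(2) by (rule vs.span_minimal[OF _ subspace_filt])
  then show ?thesis
    using that pow_apply_filtration[of filt M0 k0 C b] subspace_filt raises by blast
qed

lemma dim_pow_apply_poly_bound:
  assumes "(C, M0) \<in> gen_pairs smul actA actV"
  obtains c where "1 \<le> c" "\<And>m. 1 \<le> m \<Longrightarrow> real (vs.dim (pow_apply smul C M0 m)) \<le> c * real m ^ card (UNIV :: 'n set)"
proof -
  let ?n = "card (UNIV :: 'n set)"
  have "fin_dim_subspace (op_smul smul) C" "C \<subseteq> AV_ops smul actA actV" "fin_dim_subspace smul M0"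
    using assms by (auto simp: gen_pairs_def)
  then obtain k0 b where filt: "\<And>m. pow_apply smul C M0 m \<subseteq> filt (k0 + m * b)"
    by (rule pow_apply_filt_bound) blast
  have "1 \<le> (k0 + b + 1) ^ ?n * (card G + 1)" by (simp add: Suc_le_eq)
  then have c: "1 \<le> real ((k0 + b + 1) ^ ?n * (card G + 1))" by (metis of_nat_1 of_nat_le_iff)
  show ?thesis
  proof (rule that[OF c])
    fix m :: nat assume m: "1 \<le> m"
    have "vs.dim (pow_apply smul C M0 m) \<le> card (filt_spanning (k0 + m * b))"
      using filt[of m] filt_subset_span by (intro vs.dim_le_card[OF _ finite_filt_spanning]) blast
    also have "\<dots> \<le> (k0 + m * b + 1) ^ ?n * card G"
      by (rule card_filt_spanning)
    also have "\<dots> \<le> ((k0 + b + 1) * m) ^ ?n * (card G + 1)"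
    proof (intro mult_mono power_mono)
      have "k0 \<le> k0 * m" using m by simp
      moreover have "(k0 + b + 1) * m = k0 * m + m * b + m" by (simp add: algebra_simps)
      ultimately show "k0 + m * b + 1 \<le> (k0 + b + 1) * m" using m by linarith
    qed simp_all
    also have "\<dots> = (k0 + b + 1) ^ ?n * (card G + 1) * m ^ ?n"
      by (simp only: power_mult_distrib ac_simps)
    finally show "real (vs.dim (pow_apply smul C M0 m)) \<le> real ((k0 + b + 1) ^ ?n * (card G + 1)) * real m ^ ?n"
      by (metis of_nat_le_iff of_nat_mult of_nat_power)
  qed
qed

lemma gk_growth_le:
  assumes "(C, M0) \<in> gen_pairs smul actA actV"
  shows "gk_growth smul C M0 \<le> ereal (real (card (UNIV :: 'n set)))"
proof -
  obtain c where "1 \<le> c" "\<And>m. 1 \<le> m \<Longrightarrow> real (vs.dim (pow_apply smul C M0 m)) \<le> c * real m ^ card (UNIV :: 'n set)"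
    using dim_pow_apply_poly_bound[OF assms] by blast
  then show ?thesis
    unfolding gk_growth_def by (intro limsup_log_le_of_poly_bound eventually_sequentiallyI)
qed

lemma monom_in_pow_apply_basic:
  assumes "a \<in> exp_box m" "g \<in> G"
  shows "actA (monom_mp a) g \<in> pow_apply smul basic_ops (vs.span G) m"
  using assms(1)
proof (induction m arbitrary: a)
  case 0
  then have "a = 0" by (auto simp: exp_box_def intro!: poly_mapping_eqI)
  then show ?case using assms(2) by (simp add: actA_1 vs.span_base)
next
  case (Suc m)
  then obtain a1 a2 where a: "a1 \<in> exp_box 1" "a2 \<in> exp_box m" "a = a1 + a2"
    by (auto elim: exp_box_Suc_split)
  then have "actA (monom_mp a1) (actA (monom_mp a2) g) \<in> (\<Union>T\<in>basic_ops. T ` pow_apply smul basic_ops (vs.span G) m)"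
    using Suc.IH actA_monom_in_basic_ops by blast
  then show ?case by (simp add: a(3) monom_mp_add actA_mult vs.span_base)
qed

definition point_op :: "'m \<Rightarrow> 'm \<Rightarrow> 'm \<Rightarrow> 'm" where
  "point_op g y = (\<lambda>x. if x = g then y else 0)"

definition monom_on_gens :: "('n \<Rightarrow>\<^sub>0 nat) \<Rightarrow> 'm \<Rightarrow> 'm" where
  "monom_on_gens a = (\<lambda>x. if x \<in> G then actA (monom_mp a) x else 0)"

lemma monom_on_gens_eq_sum: "monom_on_gens a = (\<Sum>g\<in>G. point_op g (actA (monom_mp a) g))"
  using finite_gens by (simp add: fun_eq_iff sum_fun_apply point_op_def monom_on_gens_def)

lemma point_op_span:
  assumes "y \<in> vs.span B"
  shows "point_op g y \<in> op.span (point_op g ` B)"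
proof -
  have "vs.subspace {y. point_op g y \<in> op.span (point_op g ` B)}"
  proof -
    have "point_op g 0 = 0" "point_op g (x + y) = point_op g x + point_op g y"
      "point_op g (smul c x) = op_smul smul c (point_op g x)" for x y c
      by (simp_all add: point_op_def fun_eq_iff)
    then show ?thesis by (auto simp: vs.subspace_def op.span_zero op.span_add op.span_scale)
  qed
  with assms have "y \<in> {y. point_op g y \<in> op.span (point_op g ` B)}"
    by (rule vs.span_subspace_induct) (simp add: op.span_base)
  then show ?thesis by simp
qed

lemma inj_monom_on_gens:
  assumes "(y::'m) \<noteq> 0"
  shows "inj monom_on_gens"
proof (rule injI)
  fix a b assume eq: "monom_on_gens a = monom_on_gens b"
  have "actA (monom_mp a - monom_mp b) g = 0" if "g \<in> G" for g
  proof -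
    have "monom_on_gens a g = monom_on_gens b g" using eq by simp
    then show ?thesis using that by (simp add: monom_on_gens_def actA_diff)
  qed
  then have "monom_mp a - monom_mp b = (0 :: ('n, 'k) mpoly)"
    by (rule actA_vanishing_on_gens_eq_0[OF assms])
  then have "(monom_mp a :: ('n, 'k) mpoly) = monom_mp b" by simp
  then show "a = b" by (rule monom_mp_inj)
qed

text \<open>A vanishing linear combination of the \<open>monom_on_gens a\<close> is the action on \<open>G\<close> of the
  polynomial with those coefficients, which must then be zero.\<close>

lemma independent_monom_on_gens:
  assumes "(y::'m) \<noteq> 0" and S: "finite S"
  shows "op.independent (monom_on_gens ` S)"
proof
  assume "op.dependent (monom_on_gens ` S)"
  then obtain u where u: "\<exists>w\<in>monom_on_gens ` S. u w \<noteq> 0"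
    "(\<Sum>w\<in>monom_on_gens ` S. op_smul smul (u w) w) = 0"
    using op.dependent_finite[of "monom_on_gens ` S"] S by auto
  have inj: "inj_on monom_on_gens S" using inj_monom_on_gens[OF assms(1)] by (simp add: inj_on_def inj_def)
  have u0: "(\<Sum>a\<in>S. op_smul smul (u (monom_on_gens a)) (monom_on_gens a)) = 0"
    using u(2) sum.reindex[OF inj, of "\<lambda>w. op_smul smul (u w) w"] by (simp add: comp_def)
  define F where "F = (\<Sum>a\<in>S. constA (u (monom_on_gens a)) * monom_mp a)"
  have "actA F g = (\<Sum>a\<in>S. op_smul smul (u (monom_on_gens a)) (monom_on_gens a)) g" if "g \<in> G" for g
    unfolding F_def sum_fun_apply op_smul_apply monom_on_gens_def
    using that by (simp add: actA_sum actA_constA_mult)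
  then have "F = 0" using actA_vanishing_on_gens_eq_0[OF assms(1)] u0 by simp
  moreover obtain a0 where a0: "a0 \<in> S" "u (monom_on_gens a0) \<noteq> 0" using u(1) by blast
  moreover have "lookup F a0 = u (monom_on_gens a0)"
    using S a0(1) by (simp add: F_def Poly_Mapping.lookup_sum lookup_constA_monom)
  ultimately show False by simp
qed

text \<open>The \<open>(m+1)\<^sup>n\<close> independent operators \<open>monom_on_gens a\<close>, \<open>a \<in> exp_box m\<close>, lie in the span of the
  \<open>point_op g y\<close> with \<open>g \<in> G\<close> and \<open>y\<close> in a basis of \<open>basic_ops\<^sup>m (span G)\<close>.\<close>

lemma dim_pow_apply_basic_ge:
  assumes "(y::'m) \<noteq> 0"
  shows "(m + 1) ^ card (UNIV :: 'n set) \<le> card G * vs.dim (pow_apply smul basic_ops (vs.span G) m)"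
proof -
  let ?P = "pow_apply smul basic_ops (vs.span G) m"
  obtain B where B: "B \<subseteq> ?P" "vs.independent B" "?P \<subseteq> vs.span B" "card B = vs.dim ?P"
    by (rule vs.basis_exists)
  have "finite B"
  proof -
    obtain k0 b where "\<And>m. pow_apply smul basic_ops (vs.span G) m \<subseteq> filt (k0 + m * b)"
      by (rule pow_apply_filt_bound[OF fin_dim_basic_ops basic_ops_subset_AV_ops fin_dim_span_gens]) blast
    then have "B \<subseteq> vs.span (filt_spanning (k0 + m * b))" using B(1) filt_subset_span by blast
    then show ?thesis using vs.independent_span_bound[OF finite_filt_spanning B(2)] by blast
  qed
  let ?E = "(\<lambda>(g, y). point_op g y) ` (G \<times> B)"
  have "monom_on_gens ` exp_box m \<subseteq> op.span ?E"
  proof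
    fix w assume "w \<in> monom_on_gens ` exp_box m"
    then obtain a where a: "a \<in> exp_box m" "w = monom_on_gens a" by blast
    have "point_op g (actA (monom_mp a) g) \<in> op.span ?E" if g: "g \<in> G" for g
    proof -
      have "point_op g (actA (monom_mp a) g) \<in> op.span (point_op g ` B)"
        using monom_in_pow_apply_basic[OF a(1) g] B(3) by (intro point_op_span) blast
      moreover have "point_op g ` B \<subseteq> ?E" using g by auto
      ultimately show ?thesis using op.span_mono by blast
    qed
    then show "w \<in> op.span ?E" unfolding a(2) monom_on_gens_eq_sum by (intro op.span_sum)
  qed
  moreover have "finite ?E" using \<open>finite B\<close> finite_gens by simp
  ultimately have "card (monom_on_gens ` exp_box m) \<le> card ?E"
    using op.independent_span_bound[OF _ independent_monom_on_gens[OF assms finite_exp_box]] by blast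
  also have "\<dots> \<le> card (G \<times> B)"
    using \<open>finite B\<close> finite_gens by (intro card_image_le) simp
  also have "\<dots> = card G * vs.dim ?P"
    using B(4) by (simp add: card_cartesian_product)
  finally show ?thesis
    using inj_monom_on_gens[OF assms] card_exp_box[of m] by (metis card_image inj_on_subset subset_UNIV)
qed

lemma basic_pair_in_gen_pairs: "(basic_ops, vs.span G) \<in> gen_pairs smul actA actV"
  unfolding gen_pairs_def
  using fin_dim_span_gens fin_dim_basic_ops id_in_basic_ops basic_ops_subset_AV_ops AV_ops_eq_alg_gen_basic
    span_AV_ops_image_eq_UNIV[OF vs.span_superset] by auto

lemma gk_growth_basic_ge:
  assumes "(y::'m) \<noteq> 0"
  shows "ereal (real (card (UNIV :: 'n set))) \<le> gk_growth smul basic_ops (vs.span G)"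
proof -
  have "G \<noteq> {}" using gens_span[of y] assms by auto
  then have pos: "0 < real (card G)" using finite_gens by (simp add: card_gt_0_iff)
  have bound: "real m ^ card (UNIV :: 'n set) \<le> real (card G) * real (vs.dim (pow_apply smul basic_ops (vs.span G) m))" for m
  proof -
    have "real m ^ card (UNIV :: 'n set) \<le> real ((m + 1) ^ card (UNIV :: 'n set))"
      by (simp add: power_mono)
    also have "\<dots> \<le> real (card G * vs.dim (pow_apply smul basic_ops (vs.span G) m))"
      using dim_pow_apply_basic_ge[OF assms, of m] by (simp only: of_nat_le_iff)
    finally show ?thesis by simp
  qed
  show ?thesis
    unfolding gk_growth_def by (rule limsup_log_ge_of_poly_bound[OF pos always_eventually]) (use bound in blast)
qed

lemma GKdim_AV_eq:
  assumes "(y::'m) \<noteq> 0"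
  shows "GKdim_AV smul actA actV = ereal (real (card (UNIV :: 'n set)))"
  unfolding GKdim_AV_def
proof (rule antisym)
  show "(SUP p\<in>gen_pairs smul actA actV. gk_growth smul (fst p) (snd p)) \<le> ereal (real (card (UNIV :: 'n set)))"
    by (rule SUP_least) (metis gk_growth_le prod.collapse)
  show "ereal (real (card (UNIV :: 'n set))) \<le> (SUP p\<in>gen_pairs smul actA actV. gk_growth smul (fst p) (snd p))"
    by (rule SUP_upper2[OF basic_pair_in_gen_pairs]) (simp add: gk_growth_basic_ge[OF assms])
qed

end

theorem proposition3p2:
  fixes smul :: "'k::field_char_0 \<Rightarrow> 'm::ab_group_add \<Rightarrow> 'm"
    and actA :: "('n::finite, 'k) mpoly \<Rightarrow> 'm \<Rightarrow> 'm"
    and actV :: "(('n, 'k) mpoly \<Rightarrow> ('n, 'k) mpoly) \<Rightarrow> 'm \<Rightarrow> 'm"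
  assumes "alg_closed_field TYPE('k)"
    and "AV_module smul actA actV"
    and "fg_A_module actA"
  shows "holonomic smul actA actV"
proof -
  obtain G where "finite G" "\<forall>m. \<exists>c. m = (\<Sum>g\<in>G. actA (c g) g)"
    using assms(3) unfolding fg_A_module_def by blast
  then interpret fg_av_module smul actA actV G
    using assms(2) by unfold_locales auto
  have "GKdim_AV smul actA actV = ereal (real (card (UNIV :: 'n set)))" if "(UNIV :: 'm set) \<noteq> {0}"
    using that GKdim_AV_eq by blast
  then show ?thesis
    unfolding holonomic_def using fg_AV_module by blast
qed

end
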